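(* Let $\psi$, $\Psi$, $I$, $I_j(\theta)$ and $F_{i,\theta}(\varepsilon,\boldsymbol\alpha)$ be as in the context, and assume the right-tail condition: for every $\varepsilon>0$ and all $\theta,\vartheta\in\Theta$, $\theta\neq\vartheta$, $$\lim_{L\to\infty}\mathsf P_\theta\Big\{\frac{1}{\psi(L)}\max_{1\le n\le L}\lambda_{\theta,\vartheta}(n)>(1+\varepsilon)I(\theta,\vartheta)\Big\}=0 .$$ Then for every $0<\varepsilon<1$: $$\lim_{\alpha_{\max}\to0}\ \inf_{D\in\mathbb C(\boldsymbol\alpha)}\mathsf P_\theta\{T>F_{i,\theta}(\varepsilon,\boldsymbol\alpha)\}=1\quad\text{for all }\theta\in\Theta_i,\ i\in\mathcal N_0,$$ $$\lim_{\alpha_{\max}\to0}\ \inf_{D\in\mathbb C(\boldsymbol\alpha)}\mathsf P_\theta\Big\{T>\min_{0\le i\le N}F_{i,\theta}(\varepsilon,\boldsymbol\alpha)\Big\}=1\quad\text{for all }\theta\in\Theta_{\rm in}.$$ Consequently, for all $r\ge1$, as $\alpha_{\max}\to0$, $$\inf_{D\in\mathbb C(\boldsymbol\alpha)}\mathsf E_\theta[T^r]\ge [F_{i,\theta}(\boldsymbol\alpha)]^r(1+o(1))\quad\text{for all }\theta\in\Theta_i,\ i\in\mathcal N_0,$$ $$\inf_{D\in\mathbb C(\boldsymbol\alpha)}\mathsf E_\theta[T^r]\ge \Big[\min_{i\in\mathcal N_0}F_{i,\theta}(\boldsymbol\alpha)\Big]^r(1+o(1))\quad\text{for all }\theta\in\Theta_{\rm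 in}.$$ (Here $T$ denotes the stopping time of the test $D=(T,d)$.)
   Context: Observations $X_1,X_2,\dots$ are defined on a measurable space with a family of probability measures $\{\mathsf P_\theta,\theta\in\Theta\}$, $\Theta\subseteq\mathbb R^l$; $\mathcal F_n=\sigma(X_1,\dots,X_n)$, $\mathbf X_1^n=(X_1,\dots,X_n)$. The restriction $\mathsf P_\theta^n$ of $\mathsf P_\theta$ to $\mathcal F_n$ has density $p_{\theta,n}(\mathbf X_1^n)=\prod_{t=1}^n f_{\theta,t}(X_t\mid\mathbf X_1^{t-1})$ with respect to a $\sigma$-finite measure, and $\mathsf P^n_\theta,\mathsf P^n_\vartheta$ are mutually absolutely continuous for all $n\ge1$ and $\theta,\vartheta\in\Theta$. $\mathsf E_\theta$ is expectation under $\mathsf P_\theta$. The log-likelihood ratio is $\lambda_{\theta,\vartheta}(n)=\log[p_{\theta,n}(\mathbf X_1^n)/p_{\vartheta,n}(\mathbf X_1^n)]$. $\Theta$ is the disjoint union of $\Theta_0,\Theta_1,\dots,\Theta_N$ ($N\ge1$) and an indifference zone $\Theta_{\rm in}$ (possibly empty); hypothesis $H_i$ is $\theta\in\Theta_i$; $\mathcal N_0=\{0,1,\dots,N\}$. A (multi-hypothesis sequential) test $D=(T,d)$ consists of a stopping time $T$ w.r.t. $(\mathcal F_n)$ and an $\mathcal F_T$-measurable terminal decision $d\in\mathcal N_0$; $\{d=i\}$ means $T<\infty$ and $H_i$ is accepted. For a matrix $\boldsymbol\alpha=(\alpha_{ij})_{i\ne j}$ with $\alpha_{ij}\in(0,1)$,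 $\mathbb C(\boldsymbol\alpha)=\{D:\sup_{\theta\in\Theta_i}\mathsf P_\theta(d=j)\le\alpha_{ij}\ \forall i\ne j\}$ and $\alpha_{\max}=\max_{i\ne j}\alpha_{ij}$. Limits as $\alpha_{\max}\to0$ are taken along families of matrices for which $|\log\alpha_{ij}|/|\log\alpha_{\max}|\to c_{ij}\in(0,1]$ for all $i\ne j$. The function $\psi:\mathbb R_+\to\mathbb R_+$ is increasing and one-to-one with $\psi(t)\to\infty$; $\Psi=\psi^{-1}$, $\Psi(t)\to\infty$, and $\lim_{\delta\to1}\lim_{t\to\infty}\Psi(\delta t)/\Psi(t)=1$. The function $I(\theta,\vartheta)$ ($\theta\ne\vartheta$) is positive and continuous and satisfies the separability conditions: $\min_{j\ne i}\inf_{\vartheta\in\Theta_j}I(\theta,\vartheta)>0$ for all $\theta\in\Theta_i$, $i\in\mathcal N_0$, and $\min_{i\in\mathcal N_0}\inf_{\vartheta\in\Theta_i}I(\theta,\vartheta)>0$ for all $\theta\in\Theta_{\rm in}$. Write $I_j(\theta)=\inf_{\vartheta\in\Theta_j}I(\theta,\vartheta)$, $F_{i,\theta}(\varepsilon,\boldsymbol\alpha)=\Psi\big((1-\varepsilon)\max_{j\in\mathcal N_0\setminus i}|\log\alpha_{ji}|/I_j(\theta)\big)$ and $F_{i,\theta}(\boldsymbol\alpha)=F_{i,\theta}(0,\boldsymbol\alpha)$. *)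

theory Defs
  imports "HOL-Probability.Probability"
begin

definition obs_vec :: "(nat \<Rightarrow> 'w \<Rightarrow> 'x) \<Rightarrow> nat \<Rightarrow> 'w \<Rightarrow> (nat \<Rightarrow> 'x)" where
  "obs_vec X n \<omega> = (\<lambda>i\<in>{1..n}. X i \<omega>)"

definition obs_filt :: "'w measure \<Rightarrow> 'x measure \<Rightarrow> (nat \<Rightarrow> 'w \<Rightarrow> 'x) \<Rightarrow> nat \<Rightarrow> 'w measure" where
  "obs_filt \<Omega> S X n =
     sigma (space \<Omega>) {X i -` A \<inter> space \<Omega> | i A. i \<in> {1..n} \<and> A \<in> sets S}"

definition llr :: "('p \<Rightarrow> nat \<Rightarrow> (nat \<Rightarrow> 'x) \<Rightarrow> real) \<Rightarrow> (nat \<Rightarrow> 'w \<Rightarrow> 'x)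
    \<Rightarrow> 'p \<Rightarrow> 'p \<Rightarrow> nat \<Rightarrow> 'w \<Rightarrow> real" where
  "llr p X \<theta> \<theta>' n \<omega> = ln (p \<theta> n (obs_vec X n \<omega>) / p \<theta>' n (obs_vec X n \<omega>))"

text \<open>A multi-hypothesis sequential test (T,d): T is a stopping time (possibly infinite)
  w.r.t. F_n, d is F_T-measurable with values in {0..N}; d is only meaningful on {T < infinity}.\<close>
definition is_test :: "'w measure \<Rightarrow> 'x measure \<Rightarrow> (nat \<Rightarrow> 'w \<Rightarrow> 'x) \<Rightarrow> nat
    \<Rightarrow> ('w \<Rightarrow> enat) \<Rightarrow> ('w \<Rightarrow> nat) \<Rightarrow> bool" where
  "is_test \<Omega> S X N T d \<longleftrightarrow>
     (\<forall>n. {\<omega>\<in>space \<Omega>. T \<omega> \<le> enat n} \<in> sets (obs_filt \<Omega> S X n)) \<and>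
     (\<forall>n j. {\<omega>\<in>space \<Omega>. T \<omega> = enat n \<and> d \<omega> = j} \<in> sets (obs_filt \<Omega> S X n)) \<and>
     (\<forall>\<omega>\<in>space \<Omega>. T \<omega> \<noteq> \<infinity> \<longrightarrow> d \<omega> \<le> N)"

definition accept_event :: "'w measure \<Rightarrow> ('w \<Rightarrow> enat) \<Rightarrow> ('w \<Rightarrow> nat) \<Rightarrow> nat \<Rightarrow> 'w set" where
  "accept_event \<Omega> T d j = {\<omega>\<in>space \<Omega>. T \<omega> \<noteq> \<infinity> \<and> d \<omega> = j}"

definition test_class :: "'w measure \<Rightarrow> 'x measure \<Rightarrow> (nat \<Rightarrow> 'w \<Rightarrow> 'x) \<Rightarrow> nat
    \<Rightarrow> (nat \<Rightarrow> 'p set) \<Rightarrow> ('p \<Rightarrow> 'w measure) \<Rightarrow> (nat \<Rightarrow> nat \<Rightarrow> real)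
    \<Rightarrow> (('w \<Rightarrow> enat) \<times> ('w \<Rightarrow> nat)) set" where
  "test_class \<Omega> S X N \<Theta> P \<alpha> =
     {(T, d). is_test \<Omega> S X N T d \<and>
        (\<forall>i\<le>N. \<forall>j\<le>N. i \<noteq> j \<longrightarrow>
           (\<forall>\<theta>\<in>\<Theta> i. measure (P \<theta>) (accept_event \<Omega> T d j) \<le> \<alpha> i j))}"

definition alpha_max :: "nat \<Rightarrow> (nat \<Rightarrow> nat \<Rightarrow> real) \<Rightarrow> real" where
  "alpha_max N \<alpha> = Max {\<alpha> i j | i j. i \<le> N \<and> j \<le> N \<and> i \<noteq> j}"

definition Ij :: "('p \<Rightarrow> 'p \<Rightarrow> real) \<Rightarrow> (nat \<Rightarrow> 'p set) \<Rightarrow> nat \<Rightarrow> 'p \<Rightarrow> real" where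
  "Ij I \<Theta> j \<theta> = (INF \<theta>'\<in>\<Theta> j. I \<theta> \<theta>')"

definition Fbound :: "(real \<Rightarrow> real) \<Rightarrow> ('p \<Rightarrow> 'p \<Rightarrow> real) \<Rightarrow> (nat \<Rightarrow> 'p set) \<Rightarrow> nat
    \<Rightarrow> nat \<Rightarrow> 'p \<Rightarrow> real \<Rightarrow> (nat \<Rightarrow> nat \<Rightarrow> real) \<Rightarrow> real" where
  "Fbound \<Psi> I \<Theta> N i \<theta> \<epsilon> \<alpha> =
     \<Psi> ((1 - \<epsilon>) * Max ((\<lambda>j. \<bar>ln (\<alpha> j i)\<bar> / Ij I \<Theta> j \<theta>) ` ({0..N} - {i})))"

definition T_gt :: "('w \<Rightarrow> enat) \<Rightarrow> real \<Rightarrow> 'w \<Rightarrow> bool" where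
  "T_gt T x \<omega> = (case T \<omega> of enat n \<Rightarrow> x < real n | \<infinity> \<Rightarrow> True)"

definition T_moment :: "'w measure \<Rightarrow> ('w \<Rightarrow> enat) \<Rightarrow> real \<Rightarrow> ennreal" where
  "T_moment M T r = (\<integral>\<^sup>+ \<omega>. (case T \<omega> of enat n \<Rightarrow> ennreal (real n powr r) | \<infinity> \<Rightarrow> \<infinity>) \<partial>M)"

end

theory Submission
  imports Defs
begin

text \<open>
  Fix \<open>\<theta>\<close> and a hypothesis \<open>H\<^sub>j\<close> with \<open>\<theta> \<notin> \<Theta>\<^sub>j\<close>, and pick \<open>v \<in> \<Theta>\<^sub>j\<close> with \<open>I(\<theta>,v)\<close> close to
  \<open>I\<^sub>j(\<theta>)\<close>. Changing measure from \<open>P\<^sub>\<theta>\<close> to \<open>P\<^sub>v\<close> on each \<open>\<F>\<^sub>n\<close>-event \<open>{T = n, d = i}\<close> gives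
  \<open>P\<^sub>\<theta>(T \<le> L, d = i) \<le> e\<^sup>a P\<^sub>v(d = i) + P\<^sub>\<theta>(max {\<lambda>\<^sub>\<theta>\<^sub>,\<^sub>v(n) | n \<le> L} > a)\<close>.
  For \<open>L = \<Psi>((1-\<epsilon>)|log \<alpha>\<^sub>j\<^sub>i|/I\<^sub>j(\<theta>))\<close> and \<open>a\<close> slightly above \<open>\<psi>(L) I(\<theta>,v)\<close>, the first term is
  at most a positive power of \<open>\<alpha>\<^sub>j\<^sub>i\<close> since \<open>P\<^sub>v(d = i) \<le> \<alpha>\<^sub>j\<^sub>i\<close>, and the second vanishes by the
  right-tail condition, uniformly over the tests in the class. Taking the worst \<open>j\<close> shows that
  \<open>H\<^sub>i\<close> is accepted before \<open>F\<^sub>i\<^sub>,\<^sub>\<theta>(\<epsilon>,\<alpha>)\<close> with vanishing probability. For \<open>\<theta> \<in> \<Theta>\<^sub>i\<close> every other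
  decision is an error of probability at most \<open>\<alpha>\<^sub>i\<^sub>j\<close>; in the indifference zone the early-acceptance
  bound holds for every \<open>i\<close>. The moment bounds follow by Markov's inequality, because the regularity of \<open>\<Psi>\<close>
  makes \<open>\<Psi>((1-\<epsilon>)t) / \<Psi>(t)\<close> eventually close to \<open>1\<close> for small \<open>\<epsilon>\<close>.
\<close>

section \<open>Asymptotic lemmas\<close>

lemma INF_tendsto_1:
  fixes f :: "nat \<Rightarrow> 'd \<Rightarrow> real"
  assumes nonempty: "\<And>k. C k \<noteq> {}"
    and bounds: "\<And>k D. D \<in> C k \<Longrightarrow> 1 - c k \<le> f k D \<and> f k D \<le> 1"
    and c: "c \<longlonglongrightarrow> 0"
  shows "(\<lambda>k. INF D\<in>C k. f k D) \<longlonglongrightarrow> 1"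
proof (rule tendsto_sandwich[of "\<lambda>k. 1 - c k" _ _ "\<lambda>_. 1"])
  show "\<forall>\<^sub>F k in sequentially. 1 - c k \<le> (INF D\<in>C k. f k D)"
    using nonempty bounds by (intro always_eventually allI cINF_greatest) auto
  show "\<forall>\<^sub>F k in sequentially. (INF D\<in>C k. f k D) \<le> 1"
  proof (intro always_eventually allI)
    fix k
    obtain D where D: "D \<in> C k" using nonempty by blast
    have "bdd_below (f k ` C k)" using bounds by (intro bdd_belowI2[of _ "1 - c k"]) auto
    then have "(INF D\<in>C k. f k D) \<le> f k D" using D by (rule cINF_lower)
    then show "(INF D\<in>C k. f k D) \<le> 1" using bounds[OF D] by linarith
  qed
  show "(\<lambda>k. 1 - c k) \<longlonglongrightarrow> 1" using tendsto_diff[OF tendsto_const c, of 1] by simp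
qed simp

lemma T_gt_iff:
  assumes "0 \<le> x"
  shows "T_gt T x \<omega> \<longleftrightarrow> \<not> T \<omega> \<le> enat (nat \<lfloor>x\<rfloor>)"
proof (cases "T \<omega>")
  case (enat n)
  have "real n \<le> x \<longleftrightarrow> n \<le> nat \<lfloor>x\<rfloor>"
    using le_nat_floor[of n x] of_nat_floor[OF assms] by (meson of_nat_le_iff order_trans)
  then show ?thesis
    using enat by (auto simp: T_gt_def not_le[symmetric])
qed (simp add: T_gt_def)

lemma T_moment_ge:
  assumes A: "{\<omega> \<in> space M. T_gt T x \<omega>} \<in> sets M" and x: "0 \<le> x" and r: "0 \<le> r"
  shows "ennreal (x powr r) * emeasure M {\<omega> \<in> space M. T_gt T x \<omega>} \<le> T_moment M T r"
proof -
  have "ennreal (x powr r) * emeasure M {\<omega> \<in> space M. T_gt T x \<omega>}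
      = (\<integral>\<^sup>+ \<omega>. ennreal (x powr r) * indicator {\<omega> \<in> space M. T_gt T x \<omega>} \<omega> \<partial>M)"
    using A by (simp add: nn_integral_cmult_indicator)
  also have "\<dots> \<le> T_moment M T r"
    unfolding T_moment_def
  proof (intro nn_integral_mono)
    fix \<omega>
    show "ennreal (x powr r) * indicator {\<omega> \<in> space M. T_gt T x \<omega>} \<omega>
        \<le> (case T \<omega> of enat n \<Rightarrow> ennreal (real n powr r) | \<infinity> \<Rightarrow> \<infinity>)"
      using x r by (cases "T \<omega>") (auto simp: T_gt_def indicator_def intro!: ennreal_leI powr_mono2)
  qed
  finally show ?thesis .
qed

lemma ennreal_asymptotic_lower_bound:
  fixes V :: "nat \<Rightarrow> ennreal" and G :: "nat \<Rightarrow> real"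
  assumes G: "\<And>k. 0 \<le> G k"
    and eventually_ge: "\<And>e. 0 < e \<Longrightarrow> eventually (\<lambda>k. ennreal ((1 - e) * G k) \<le> V k) sequentially"
  shows "\<exists>h. h \<longlonglongrightarrow> 0 \<and> (\<forall>k. ennreal (G k * (1 + h k)) \<le> V k)"
proof -
  \<comment> \<open>The relative deficit of \<open>V\<close> below \<open>G\<close>, truncated at \<open>0\<close>; \<open>min\<close> keeps it finite where \<open>V = \<infinity>\<close>.\<close>
  define w where "w k = enn2real (min (V k) (ennreal (G k)))" for k
  define h where "h k = (if 0 < G k then min 0 (w k / G k - 1) else 0)" for k
  have w: "ennreal (w k) = min (V k) (ennreal (G k))" for k
    unfolding w_def by (simp add: min.strict_coboundedI2)
  have "ennreal (G k * (1 + h k)) \<le> V k" for k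
  proof (cases "0 < G k")
    case True
    then have "G k * (1 + h k) \<le> w k"
      by (simp add: h_def min_def field_simps)
    then have "ennreal (G k * (1 + h k)) \<le> ennreal (w k)" by (rule ennreal_leI)
    then show ?thesis unfolding w by simp
  next
    case False
    then show ?thesis using G[of k] by (simp add: h_def)
  qed
  moreover have "h \<longlonglongrightarrow> 0"
    unfolding tendsto_iff
  proof (intro allI impI)
    fix e :: real assume e: "0 < e"
    have "e/2 > 0" using e by simp
    from eventually_ge[OF this]
    show "eventually (\<lambda>k. dist (h k) 0 < e) sequentially"
    proof eventually_elim
      case (elim k)
      show ?case
      proof (cases "0 < G k")
        case True
        have "ennreal ((1 - e/2) * G k) \<le> ennreal (G k)"
          using True e by (intro ennreal_leI) simp
        with elim have "ennreal ((1 - e/2) * G k) \<le> ennreal (w k)" unfolding w by simp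
        then have "(1 - e/2) * G k \<le> w k"
          by (simp add: w_def)
        then have "- (e/2) \<le> h k"
          using True e by (simp add: h_def field_simps)
        then show ?thesis using e by (simp add: h_def dist_real_def)
      qed (use e in \<open>simp add: h_def\<close>)
    qed
  qed
  ultimately show ?thesis by blast
qed

lemma moment_asymptotic_lower_bound:
  fixes G :: "nat \<Rightarrow> real" and H q :: "real \<Rightarrow> nat \<Rightarrow> real" and V :: "nat \<Rightarrow> ennreal"
  assumes r: "0 \<le> r" and G: "\<And>k. 0 \<le> G k"
    and H: "\<And>\<epsilon> k. 0 < \<epsilon> \<Longrightarrow> \<epsilon> < 1 \<Longrightarrow> 0 \<le> H \<epsilon> k"
    and ratio: "\<And>s. 0 < s \<Longrightarrow> s < 1 \<Longrightarrow>
      \<exists>\<epsilon>. 0 < \<epsilon> \<and> \<epsilon> < 1 \<and> eventually (\<lambda>k. s * G k \<le> H \<epsilon> k) sequentially"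
    and q: "\<And>\<epsilon>. 0 < \<epsilon> \<Longrightarrow> \<epsilon> < 1 \<Longrightarrow> q \<epsilon> \<longlonglongrightarrow> 1"
    and markov: "\<And>\<epsilon> k. 0 < \<epsilon> \<Longrightarrow> \<epsilon> < 1 \<Longrightarrow> ennreal (H \<epsilon> k powr r) * ennreal (q \<epsilon> k) \<le> V k"
  shows "\<exists>h. h \<longlonglongrightarrow> 0 \<and> (\<forall>k. ennreal (G k powr r * (1 + h k)) \<le> V k)"
proof (rule ennreal_asymptotic_lower_bound)
  fix e :: real assume e: "0 < e"
  show "eventually (\<lambda>k. ennreal ((1 - e) * G k powr r) \<le> V k) sequentially"
  proof (cases "e < 1")
    case False
    then show ?thesis by (simp add: ennreal_neg mult_nonpos_nonneg)
  next
    case True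
    \<comment> \<open>Split \<open>1 - e = s\<^sup>r \<cdot> s\<close>: one factor \<open>s\<close> is lost to \<open>H \<epsilon> / G\<close>, the other to \<open>q \<epsilon>\<close>.\<close>
    define s where "s = (1 - e) powr (1 / (r + 1))"
    have s: "0 < s" "s < 1"
      unfolding s_def using True e r powr_less_mono2[of "1 / (r + 1)" "1 - e" 1] by auto
    have "s powr r * s = s powr (r + 1)"
      using s(1) by (simp add: powr_add)
    also have "\<dots> = (1 - e) powr ((1 / (r + 1)) * (r + 1))"
      unfolding s_def by (simp add: powr_powr)
    finally have s_split: "s powr r * s = 1 - e"
      using r True by simp
    obtain \<epsilon> where \<epsilon>: "0 < \<epsilon>" "\<epsilon> < 1" and H_ge: "eventually (\<lambda>k. s * G k \<le> H \<epsilon> k) sequentially"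
      using ratio[OF s] by blast
    have "eventually (\<lambda>k. s < q \<epsilon> k) sequentially"
      using order_tendstoD(1)[OF q[OF \<epsilon>] s(2)] .
    with H_ge show ?thesis
    proof eventually_elim
      case (elim k)
      have "(1 - e) * G k powr r = (s * G k) powr r * s"
        using s_split G[of k] s(1) by (simp add: powr_mult)
      also have "\<dots> \<le> H \<epsilon> k powr r * q \<epsilon> k"
        using elim s(1) G[of k] r by (intro mult_mono powr_mono2) auto
      finally have "ennreal ((1 - e) * G k powr r) \<le> ennreal (H \<epsilon> k powr r) * ennreal (q \<epsilon> k)"
        using elim s(1) by (subst ennreal_mult[symmetric]) (auto intro: ennreal_leI)
      also have "\<dots> \<le> V k" by (rule markov[OF \<epsilon>])
      finally show ?case .
    qed
  qed
qed (simp add: G)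

lemma regularly_varying_lower_bound:
  fixes \<Psi> :: "real \<Rightarrow> real"
  assumes \<Psi>_at_top: "filterlim \<Psi> at_top at_top"
    and regular: "\<exists>g. (\<forall>\<^sub>F \<delta> in at 1. ((\<lambda>t. \<Psi> (\<delta> * t) / \<Psi> t) \<longlongrightarrow> g \<delta>) at_top)
                    \<and> (g \<longlongrightarrow> 1) (at 1)"
    and s: "s < 1"
  obtains \<epsilon> where "0 < \<epsilon>" "\<epsilon> < 1" "eventually (\<lambda>t. s * \<Psi> t \<le> \<Psi> ((1 - \<epsilon>) * t)) at_top"
proof -
  obtain g where g: "\<forall>\<^sub>F \<delta> in at 1. ((\<lambda>t. \<Psi> (\<delta> * t) / \<Psi> t) \<longlongrightarrow> g \<delta>) at_top"
    and g_1: "(g \<longlongrightarrow> 1) (at 1)"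
    using regular by blast
  have "\<forall>\<^sub>F \<delta> in at 1. ((\<lambda>t. \<Psi> (\<delta> * t) / \<Psi> t) \<longlongrightarrow> g \<delta>) at_top \<and> s < g \<delta>"
    using g order_tendstoD(1)[OF g_1 s] by eventually_elim auto
  then have "\<forall>\<^sub>F \<delta> in at_left 1. ((\<lambda>t. \<Psi> (\<delta> * t) / \<Psi> t) \<longlongrightarrow> g \<delta>) at_top \<and> s < g \<delta>"
    by (rule filter_leD[OF at_le, rotated]) simp
  moreover have "\<forall>\<^sub>F \<delta> in at_left (1::real). \<delta> \<in> {0<..<1}"
    by (rule eventually_at_left_real) simp
  ultimately have "\<forall>\<^sub>F \<delta> in at_left (1::real).
      ((\<lambda>t. \<Psi> (\<delta> * t) / \<Psi> t) \<longlongrightarrow> g \<delta>) at_top \<and> s < g \<delta> \<and> \<delta> \<in> {0<..<1}"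
    by eventually_elim auto
  then obtain \<delta> where \<delta>: "((\<lambda>t. \<Psi> (\<delta> * t) / \<Psi> t) \<longlongrightarrow> g \<delta>) at_top" "s < g \<delta>" "\<delta> \<in> {0<..<1}"
    using eventually_happens'[of "at_left (1::real)"] by auto
  have "\<forall>\<^sub>F t in at_top. s < \<Psi> (\<delta> * t) / \<Psi> t"
    by (rule order_tendstoD(1)[OF \<delta>(1,2)])
  moreover have "\<forall>\<^sub>F t in at_top. 0 < \<Psi> t"
    using \<Psi>_at_top unfolding filterlim_at_top_dense by blast
  ultimately have "\<forall>\<^sub>F t in at_top. s * \<Psi> t \<le> \<Psi> ((1 - (1 - \<delta>)) * t)"
    by eventually_elim (simp add: pos_less_divide_eq less_imp_le)
  then show ?thesis using \<delta>(3) by (intro that[of "1 - \<delta>"]) auto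
qed

lemma ex_pos_sq_margin:
  fixes \<epsilon> :: real
  assumes \<epsilon>: "0 < \<epsilon>"
  shows "\<exists>\<delta>>0. (1 + \<delta>)\<^sup>2 * (1 - \<epsilon>) < 1"
proof (rule exI[of _ "\<epsilon> / 4"], intro conjI)
  have "(1 + \<epsilon> / 4)\<^sup>2 * (1 - \<epsilon>) = 1 - (\<epsilon> / 2 + 7 / 16 * \<epsilon>\<^sup>2 + \<epsilon> ^ 3 / 16)"
    by (simp add: power2_eq_square power3_eq_cube field_simps)
  also have "\<dots> < 1"
  proof -
    have "0 \<le> \<epsilon>\<^sup>2" "0 \<le> \<epsilon> ^ 3" using \<epsilon> by simp_all
    with \<epsilon> show ?thesis by linarith
  qed
  finally show "(1 + \<epsilon> / 4)\<^sup>2 * (1 - \<epsilon>) < 1" .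
qed (use \<epsilon> in simp)

section \<open>Observations, tests and change of measure\<close>

lemma sets_obs_filt:
  "sets (obs_filt \<Omega> S X n) =
     sigma_sets (space \<Omega>) {X i -` A \<inter> space \<Omega> | i A. i \<in> {1..n} \<and> A \<in> sets S}"
  unfolding obs_filt_def by (rule sets_measure_of) auto

lemma obs_filt_0_trivial: "A \<in> sets (obs_filt \<Omega> S X 0) \<Longrightarrow> A = {} \<or> A = space \<Omega>"
  unfolding sets_obs_filt by (simp add: sigma_sets_empty_eq)

lemma enat_le_enat_iff_exists: "x \<le> enat L \<longleftrightarrow> (\<exists>m\<le>L. x = enat m)"
  by (cases x) auto

lemma stop_by_eq_Union:
  assumes "is_test \<Omega> S X N T d"
  shows "{\<omega> \<in> space \<Omega>. T \<omega> \<le> enat m} = (\<Union>i\<in>{0..N}. {\<omega> \<in> space \<Omega>. T \<omega> \<le> enat m \<and> d \<omega> = i})"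
proof -
  have "d \<omega> \<le> N" if "\<omega> \<in> space \<Omega>" "T \<omega> \<le> enat m" for \<omega>
    using assms that unfolding is_test_def by (cases "T \<omega>") auto
  then show ?thesis by auto
qed

lemma emeasure_density_ln_ratio_le:
  fixes f g :: "'a \<Rightarrow> real"
  assumes f: "f \<in> borel_measurable M" "\<And>x. 0 \<le> f x"
    and g: "g \<in> borel_measurable M" "\<And>x. 0 \<le> g x"
    and ac: "absolutely_continuous (density M g) (density M f)"
    and B: "B \<in> sets M"
  shows "emeasure (density M f) (B \<inter> {x \<in> space M. ln (f x / g x) \<le> a})
           \<le> ennreal (exp a) * emeasure (density M g) B"
proof -
  define Z where "Z = {x \<in> space M. g x = 0}"
  have Z: "Z \<in> sets M" unfolding Z_def using g by measurable
  have "emeasure (density M g) Z = (\<integral>\<^sup>+ x. ennreal (g x) * indicator Z x \<partial>M)"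
    using Z g by (simp add: emeasure_density)
  also have "\<dots> = (\<integral>\<^sup>+ x. 0 \<partial>M)"
    by (intro nn_integral_cong) (auto simp: Z_def indicator_def)
  finally have "Z \<in> null_sets (density M f)"
    using ac Z unfolding absolutely_continuous_def by (auto simp: null_sets_def)
  then have null: "(\<integral>\<^sup>+ x. ennreal (f x) * indicator Z x \<partial>M) = 0"
    using Z f by (simp add: emeasure_density null_sets_def)
  \<comment> \<open>Off the null set where \<open>g\<close> vanishes, \<open>ln (f/g) \<le> a\<close> gives \<open>f \<le> e\<^sup>a g\<close>.\<close>
  have pointwise: "ennreal (f x) * indicator (B \<inter> {x \<in> space M. ln (f x / g x) \<le> a}) x
      \<le> ennreal (exp a) * (ennreal (g x) * indicator B x) + ennreal (f x) * indicator Z x"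
    if x: "x \<in> space M" for x
  proof (cases "x \<in> B \<and> ln (f x / g x) \<le> a \<and> g x \<noteq> 0")
    case True
    have "f x \<le> exp a * g x"
    proof (cases "f x = 0")
      case False
      then have "0 < f x / g x" using True f(2)[of x] g(2)[of x] by auto
      then have "f x / g x \<le> exp a" using True by (metis exp_le_cancel_iff exp_ln)
      then show ?thesis using True g(2)[of x] by (simp add: divide_le_eq mult.commute)
    qed (use True g(2)[of x] in simp)
    then have "ennreal (f x) \<le> ennreal (exp a) * ennreal (g x)"
      by (simp add: ennreal_mult'[symmetric] ennreal_leI)
    with True x show ?thesis by (auto simp: indicator_def add_increasing2)
  qed (use x in \<open>auto simp: indicator_def Z_def\<close>)
  have "emeasure (density M f) (B \<inter> {x \<in> space M. ln (f x / g x) \<le> a})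
      = (\<integral>\<^sup>+ x. ennreal (f x) * indicator (B \<inter> {x \<in> space M. ln (f x / g x) \<le> a}) x \<partial>M)"
    using B f g by (intro emeasure_density) auto
  also have "\<dots> \<le> (\<integral>\<^sup>+ x. ennreal (exp a) * (ennreal (g x) * indicator B x)
                          + ennreal (f x) * indicator Z x \<partial>M)"
    by (intro nn_integral_mono pointwise)
  also have "\<dots> = ennreal (exp a) * emeasure (density M g) B"
    using B Z f g null by (simp add: nn_integral_add nn_integral_cmult emeasure_density)
  finally show ?thesis .
qed

locale observations =
  fixes \<Omega> :: "'w measure" and S :: "'x measure" and X :: "nat \<Rightarrow> 'w \<Rightarrow> 'x"
  assumes X_measurable: "\<And>i. X i \<in> measurable \<Omega> S"
begin

lemma obs_vec_measurable: "obs_vec X n \<in> measurable \<Omega> (PiM {1..n} (\<lambda>_. S))"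
  unfolding obs_vec_def[abs_def] using X_measurable by (intro measurable_restrict) auto

lemma obs_filt_eq_vimage:
  assumes A: "A \<in> sets (obs_filt \<Omega> S X n)"
  obtains B where "B \<in> sets (PiM {1..n} (\<lambda>_. S))" "A = obs_vec X n -` B \<inter> space \<Omega>"
proof -
  let ?V = "vimage_algebra (space \<Omega>) (obs_vec X n) (PiM {1..n} (\<lambda>_. S))"
  have sets_V: "sets ?V = {obs_vec X n -` B \<inter> space \<Omega> | B. B \<in> sets (PiM {1..n} (\<lambda>_. S))}"
    using measurable_space[OF obs_vec_measurable] by (intro sets_vimage_algebra2) auto
  have "{X i -` A \<inter> space \<Omega> | i A. i \<in> {1..n} \<and> A \<in> sets S} \<subseteq> sets ?V"
  proof safe
    fix i A assume i: "i \<in> {1..n}" and A: "A \<in> sets S"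
    have "X i -` A \<inter> space \<Omega> =
        obs_vec X n -` {y \<in> space (PiM {1..n} (\<lambda>_. S)). y i \<in> A} \<inter> space \<Omega>"
      using i measurable_space[OF obs_vec_measurable] by (auto simp: obs_vec_def)
    moreover have "{y \<in> space (PiM {1..n} (\<lambda>_. S)). y i \<in> A} \<in> sets (PiM {1..n} (\<lambda>_. S))"
      using i A by (intro sets_Collect_single) auto
    ultimately show "X i -` A \<inter> space \<Omega> \<in> sets ?V" unfolding sets_V by blast
  qed
  then have "sets (obs_filt \<Omega> S X n) \<subseteq> sets ?V"
    unfolding sets_obs_filt
    using sigma_algebra.sigma_sets_subset[OF sets.sigma_algebra_axioms[of ?V]] by simp
  with A that show ?thesis unfolding sets_V by blast
qed

lemma obs_filt_subset: "A \<in> sets (obs_filt \<Omega> S X n) \<Longrightarrow> A \<in> sets \<Omega>"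
  by (metis obs_filt_eq_vimage obs_vec_measurable measurable_sets)

lemma is_test_sets:
  assumes test: "is_test \<Omega> S X N T d"
  shows sets_stop_by: "{\<omega> \<in> space \<Omega>. T \<omega> \<le> enat m} \<in> sets \<Omega>"
    and sets_stop_by_accept: "{\<omega> \<in> space \<Omega>. T \<omega> \<le> enat m \<and> d \<omega> = i} \<in> sets \<Omega>"
    and sets_accept_event: "accept_event \<Omega> T d i \<in> sets \<Omega>"
proof -
  have at: "{\<omega> \<in> space \<Omega>. T \<omega> = enat n \<and> d \<omega> = i} \<in> sets \<Omega>" for n i
    using test obs_filt_subset unfolding is_test_def by blast
  show "{\<omega> \<in> space \<Omega>. T \<omega> \<le> enat m} \<in> sets \<Omega>"
    using test obs_filt_subset unfolding is_test_def by blast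
  have "{\<omega> \<in> space \<Omega>. T \<omega> \<le> enat m \<and> d \<omega> = i}
      = (\<Union>n\<in>{0..m}. {\<omega> \<in> space \<Omega>. T \<omega> = enat n \<and> d \<omega> = i})"
    using enat_le_enat_iff_exists by auto
  then show "{\<omega> \<in> space \<Omega>. T \<omega> \<le> enat m \<and> d \<omega> = i} \<in> sets \<Omega>" using at by auto
  have "accept_event \<Omega> T d i = (\<Union>n. {\<omega> \<in> space \<Omega>. T \<omega> = enat n \<and> d \<omega> = i})"
    unfolding accept_event_def by auto
  then show "accept_event \<Omega> T d i \<in> sets \<Omega>" using at by auto
qed

end

locale likelihood_model = observations \<Omega> S X
  for \<Omega> :: "'w measure" and S :: "'x measure" and X :: "nat \<Rightarrow> 'w \<Rightarrow> 'x" +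
  fixes \<Theta>all :: "'p set" and P :: "'p \<Rightarrow> 'w measure"
    and \<mu> :: "nat \<Rightarrow> (nat \<Rightarrow> 'x) measure" and p :: "'p \<Rightarrow> nat \<Rightarrow> (nat \<Rightarrow> 'x) \<Rightarrow> real"
  assumes prob_space_P: "\<And>\<theta>. \<theta> \<in> \<Theta>all \<Longrightarrow> prob_space (P \<theta>)"
    and sets_P: "\<And>\<theta>. \<theta> \<in> \<Theta>all \<Longrightarrow> sets (P \<theta>) = sets \<Omega>"
    and sets_\<mu>: "\<And>n. 1 \<le> n \<Longrightarrow> sets (\<mu> n) = sets (PiM {1..n} (\<lambda>_. S))"
    and density_nonneg: "\<And>\<theta> n x. \<theta> \<in> \<Theta>all \<Longrightarrow> 1 \<le> n \<Longrightarrow> 0 \<le> p \<theta> n x"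
    and density_measurable:
      "\<And>\<theta> n. \<theta> \<in> \<Theta>all \<Longrightarrow> 1 \<le> n \<Longrightarrow> p \<theta> n \<in> borel_measurable (PiM {1..n} (\<lambda>_. S))"
    and distr_obs_vec: "\<And>\<theta> n. \<theta> \<in> \<Theta>all \<Longrightarrow> 1 \<le> n \<Longrightarrow>
      distr (P \<theta>) (PiM {1..n} (\<lambda>_. S)) (obs_vec X n) = density (\<mu> n) (\<lambda>x. ennreal (p \<theta> n x))"
    and distr_obs_vec_ac: "\<And>\<theta> \<theta>' n. \<theta> \<in> \<Theta>all \<Longrightarrow> \<theta>' \<in> \<Theta>all \<Longrightarrow> 1 \<le> n \<Longrightarrow>
      absolutely_continuous (distr (P \<theta>) (PiM {1..n} (\<lambda>_. S)) (obs_vec X n))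
                            (distr (P \<theta>') (PiM {1..n} (\<lambda>_. S)) (obs_vec X n))"
begin

lemma space_P: "\<theta> \<in> \<Theta>all \<Longrightarrow> space (P \<theta>) = space \<Omega>"
  using sets_P sets_eq_imp_space_eq by blast

lemma llr_measurable:
  assumes "\<theta> \<in> \<Theta>all" "v \<in> \<Theta>all" "1 \<le> n"
  shows "llr p X \<theta> v n \<in> borel_measurable \<Omega>"
proof -
  have "(\<lambda>\<omega>. p t n (obs_vec X n \<omega>)) \<in> borel_measurable \<Omega>" if "t \<in> \<Theta>all" for t
    using measurable_comp[OF obs_vec_measurable density_measurable[OF that assms(3)]]
    by (simp add: comp_def)
  then show ?thesis using assms unfolding llr_def[abs_def] by measurable
qed

lemma prob_llr_le:
  assumes \<theta>: "\<theta> \<in> \<Theta>all" and v: "v \<in> \<Theta>all" and n: "1 \<le> n"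
    and A: "A \<in> sets (obs_filt \<Omega> S X n)"
  shows "measure (P \<theta>) (A \<inter> {\<omega> \<in> space \<Omega>. llr p X \<theta> v n \<omega> \<le> a}) \<le> exp a * measure (P v) A"
proof -
  let ?Y = "PiM {1..n} (\<lambda>_. S)" and ?ov = "obs_vec X n"
  obtain B where B: "B \<in> sets ?Y" and A_eq: "A = ?ov -` B \<inter> space \<Omega>"
    using obs_filt_eq_vimage[OF A] .
  have sets_\<mu>n: "sets (\<mu> n) = sets ?Y" and space_\<mu>n: "space (\<mu> n) = space ?Y"
    using sets_\<mu>[OF n] sets_eq_imp_space_eq by auto
  define D where "D = {x \<in> space ?Y. ln (p \<theta> n x / p v n x) \<le> a}"
  have dens_meas: "p t n \<in> borel_measurable (\<mu> n)" if "t \<in> \<Theta>all" for t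
    using density_measurable[OF that n] measurable_cong_sets[OF sets_\<mu>n refl] by blast
  have D: "D \<in> sets ?Y"
    unfolding D_def using density_measurable[OF \<theta> n] density_measurable[OF v n] by measurable
  have ov: "?ov \<in> measurable (P t) ?Y" if "t \<in> \<Theta>all" for t
    using obs_vec_measurable measurable_cong_sets[OF sets_P[OF that] refl] by blast
  have measure_vimage: "measure (P t) (?ov -` E \<inter> space \<Omega>) = measure (distr (P t) ?Y ?ov) E"
    if "t \<in> \<Theta>all" "E \<in> sets ?Y" for t E
    using measure_distr[OF ov[OF that(1)] that(2)] space_P[OF that(1)] by simp
  interpret P\<theta>_obs: prob_space "distr (P \<theta>) ?Y ?ov"
    using prob_space.prob_space_distr[OF prob_space_P[OF \<theta>] ov[OF \<theta>]] .
  interpret Pv_obs: prob_space "distr (P v) ?Y ?ov"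
    using prob_space.prob_space_distr[OF prob_space_P[OF v] ov[OF v]] .
  have "emeasure (distr (P \<theta>) ?Y ?ov) (B \<inter> D) \<le> ennreal (exp a) * emeasure (distr (P v) ?Y ?ov) B"
    unfolding distr_obs_vec[OF \<theta> n] distr_obs_vec[OF v n] D_def space_\<mu>n[symmetric]
    using B sets_\<mu>n dens_meas[OF \<theta>] dens_meas[OF v] density_nonneg[OF \<theta> n] density_nonneg[OF v n]
      distr_obs_vec_ac[OF v \<theta> n, unfolded distr_obs_vec[OF v n] distr_obs_vec[OF \<theta> n]]
    by (intro emeasure_density_ln_ratio_le) auto
  then have "measure (distr (P \<theta>) ?Y ?ov) (B \<inter> D) \<le> exp a * measure (distr (P v) ?Y ?ov) B"
    unfolding P\<theta>_obs.emeasure_eq_measure Pv_obs.emeasure_eq_measure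
    by (simp add: ennreal_mult[symmetric])
  moreover have "A \<inter> {\<omega> \<in> space \<Omega>. llr p X \<theta> v n \<omega> \<le> a} = ?ov -` (B \<inter> D) \<inter> space \<Omega>"
    using A_eq measurable_space[OF obs_vec_measurable] by (auto simp: D_def llr_def)
  ultimately show ?thesis
    using measure_vimage[OF \<theta> sets.Int[OF B D]] measure_vimage[OF v B] A_eq by simp
qed

lemma prob_diff_llr_exceeds_le:
  assumes \<theta>: "\<theta> \<in> \<Theta>all" and v: "v \<in> \<Theta>all" and A: "A \<in> sets (obs_filt \<Omega> S X n)"
    and n: "n \<le> L" and a: "0 \<le> a"
  shows "measure (P \<theta>) (A - {\<omega> \<in> space \<Omega>. a < Max ((\<lambda>n. llr p X \<theta> v n \<omega>) ` {1..L})})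
           \<le> exp a * measure (P v) A"
proof (cases "n = 0")
  case True
  interpret P\<theta>: prob_space "P \<theta>" by (rule prob_space_P[OF \<theta>])
  interpret Pv: prob_space "P v" by (rule prob_space_P[OF v])
  \<comment> \<open>\<open>\<F>\<^sub>0\<close> is trivial, so \<open>A\<close> is empty or sure; this is where \<open>a \<ge> 0\<close> is needed.\<close>
  from obs_filt_0_trivial[OF A[unfolded True]] show ?thesis
  proof
    assume "A = space \<Omega>"
    then have "1 \<le> exp a * measure (P v) A"
      using a space_P[OF v] Pv.prob_space by simp
    with P\<theta>.prob_le_1 show ?thesis by (rule order_trans)
  qed simp
next
  case False
  interpret P\<theta>: prob_space "P \<theta>" by (rule prob_space_P[OF \<theta>])
  have "A - {\<omega> \<in> space \<Omega>. a < Max ((\<lambda>n. llr p X \<theta> v n \<omega>) ` {1..L})}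
      \<subseteq> A \<inter> {\<omega> \<in> space \<Omega>. llr p X \<theta> v n \<omega> \<le> a}"
    using False n obs_filt_subset[OF A] sets.sets_into_space by (fastforce simp: not_less Max_le_iff)
  then have "measure (P \<theta>) (A - {\<omega> \<in> space \<Omega>. a < Max ((\<lambda>n. llr p X \<theta> v n \<omega>) ` {1..L})})
      \<le> measure (P \<theta>) (A \<inter> {\<omega> \<in> space \<Omega>. llr p X \<theta> v n \<omega> \<le> a})"
    using obs_filt_subset[OF A] False llr_measurable[OF \<theta> v, of n] sets_P[OF \<theta>]
    by (intro P\<theta>.finite_measure_mono) auto
  also have "\<dots> \<le> exp a * measure (P v) A"
    using False by (intro prob_llr_le[OF \<theta> v _ A]) simp
  finally show ?thesis .
qed

lemma prob_stop_accept_le: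
  assumes \<theta>: "\<theta> \<in> \<Theta>all" and v: "v \<in> \<Theta>all" and test: "is_test \<Omega> S X N T d"
    and L: "1 \<le> L" and a: "0 \<le> a"
  shows "measure (P \<theta>) {\<omega> \<in> space \<Omega>. T \<omega> \<le> enat L \<and> d \<omega> = i}
           \<le> exp a * measure (P v) (accept_event \<Omega> T d i)
             + measure (P \<theta>) {\<omega> \<in> space \<Omega>. a < Max ((\<lambda>n. llr p X \<theta> v n \<omega>) ` {1..L})}"
proof -
  interpret P\<theta>: prob_space "P \<theta>" by (rule prob_space_P[OF \<theta>])
  interpret Pv: prob_space "P v" by (rule prob_space_P[OF v])
  define K where "K n = {\<omega> \<in> space \<Omega>. T \<omega> = enat n \<and> d \<omega> = i}" for n
  define G where "G = {\<omega> \<in> space \<Omega>. a < Max ((\<lambda>n. llr p X \<theta> v n \<omega>) ` {1..L})}"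
  have K_F: "K n \<in> sets (obs_filt \<Omega> S X n)" for n
    using test unfolding is_test_def K_def by blast
  have K: "K n \<in> sets \<Omega>" for n
    using obs_filt_subset[OF K_F] .
  have "G = (\<Union>n\<in>{1..L}. {\<omega> \<in> space \<Omega>. a < llr p X \<theta> v n \<omega>})"
    unfolding G_def using L by (auto simp: Max_gr_iff)
  then have G: "G \<in> sets \<Omega>"
    using llr_measurable[OF \<theta> v] by (auto intro: sets.finite_UN)
  have "{\<omega> \<in> space \<Omega>. T \<omega> \<le> enat L \<and> d \<omega> = i} = (\<Union>n\<in>{0..L}. K n)"
    unfolding K_def using enat_le_enat_iff_exists by auto
  also have "measure (P \<theta>) \<dots> \<le> measure (P \<theta>) ((\<Union>n\<in>{0..L}. K n - G) \<union> G)"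
    using K G sets_P[OF \<theta>] by (intro P\<theta>.finite_measure_mono) auto
  also have "\<dots> \<le> measure (P \<theta>) (\<Union>n\<in>{0..L}. K n - G) + measure (P \<theta>) G"
    using K G sets_P[OF \<theta>] by (intro measure_Un_le) auto
  also have "measure (P \<theta>) (\<Union>n\<in>{0..L}. K n - G) \<le> (\<Sum>n\<in>{0..L}. measure (P \<theta>) (K n - G))"
    using K G sets_P[OF \<theta>] by (intro measure_UNION_le) auto
  also have "\<dots> \<le> (\<Sum>n\<in>{0..L}. exp a * measure (P v) (K n))"
    using prob_diff_llr_exceeds_le[OF \<theta> v K_F _ a] unfolding G_def by (intro sum_mono) auto
  also have "\<dots> = exp a * measure (P v) (\<Union>n\<in>{0..L}. K n)"
    using K sets_P[OF v]
    by (subst Pv.finite_measure_finite_Union) (auto simp: sum_distrib_left disjoint_family_on_def K_def)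
  also have "\<dots> \<le> exp a * measure (P v) (accept_event \<Omega> T d i)"
    using sets_accept_event[OF test] sets_P[OF v]
    by (intro mult_left_mono Pv.finite_measure_mono) (auto simp: K_def accept_event_def)
  finally show ?thesis
    unfolding G_def by simp
qed

end

locale sequential_testing = likelihood_model \<Omega> S X \<Theta>all P \<mu> p
  for \<Omega> :: "'w measure" and S :: "'x measure" and X :: "nat \<Rightarrow> 'w \<Rightarrow> 'x"
    and \<Theta>all :: "'p set" and P :: "'p \<Rightarrow> 'w measure"
    and \<mu> :: "nat \<Rightarrow> (nat \<Rightarrow> 'x) measure" and p :: "'p \<Rightarrow> nat \<Rightarrow> (nat \<Rightarrow> 'x) \<Rightarrow> real" +
  fixes N :: nat and \<Theta> :: "nat \<Rightarrow> 'p set" and \<Theta>in :: "'p set"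
    and \<psi> \<Psi> :: "real \<Rightarrow> real" and I :: "'p \<Rightarrow> 'p \<Rightarrow> real"
    and \<alpha> :: "nat \<Rightarrow> nat \<Rightarrow> nat \<Rightarrow> real"
  assumes N_pos: "1 \<le> N"
    and Theta_subset: "\<And>i. i \<le> N \<Longrightarrow> \<Theta> i \<subseteq> \<Theta>all"
    and Theta_in_subset: "\<Theta>in \<subseteq> \<Theta>all"
    and Theta_disjoint: "disjoint_family_on \<Theta> {0..N}"
    and Theta_in_disjoint: "\<And>i. i \<le> N \<Longrightarrow> \<Theta>in \<inter> \<Theta> i = {}"
    and Theta_nonempty: "\<And>i. i \<le> N \<Longrightarrow> \<Theta> i \<noteq> {}"
    and psi_strict_mono: "strict_mono_on {0..} \<psi>"
    and psi_nonneg: "\<And>x. 0 \<le> x \<Longrightarrow> 0 \<le> \<psi> x"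
    and psi_Psi: "\<And>y. 0 \<le> y \<Longrightarrow> 0 \<le> \<Psi> y \<and> \<psi> (\<Psi> y) = y"
    and Psi_at_top: "filterlim \<Psi> at_top at_top"
    and Psi_regular: "\<exists>g. (\<forall>\<^sub>F \<delta> in at 1. ((\<lambda>t. \<Psi> (\<delta> * t) / \<Psi> t) \<longlongrightarrow> g \<delta>) at_top)
                          \<and> (g \<longlongrightarrow> 1) (at 1)"
    and I_pos: "\<And>\<theta> \<theta>'. \<theta> \<in> \<Theta>all \<Longrightarrow> \<theta>' \<in> \<Theta>all \<Longrightarrow> \<theta> \<noteq> \<theta>' \<Longrightarrow> 0 < I \<theta> \<theta>'"
    and Ij_pos: "\<And>i j \<theta>. i \<le> N \<Longrightarrow> j \<le> N \<Longrightarrow> j \<noteq> i \<Longrightarrow> \<theta> \<in> \<Theta> i \<Longrightarrow> 0 < Ij I \<Theta> j \<theta>"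
    and Ij_pos_in: "\<And>j \<theta>. j \<le> N \<Longrightarrow> \<theta> \<in> \<Theta>in \<Longrightarrow> 0 < Ij I \<Theta> j \<theta>"
    and right_tail: "\<And>\<epsilon> \<theta> \<theta>'. 0 < \<epsilon> \<Longrightarrow> \<theta> \<in> \<Theta>all \<Longrightarrow> \<theta>' \<in> \<Theta>all \<Longrightarrow> \<theta> \<noteq> \<theta>' \<Longrightarrow>
      (\<lambda>L::nat. measure (P \<theta>) {\<omega> \<in> space \<Omega>.
         (1 / \<psi> (real L)) * Max ((\<lambda>n. llr p X \<theta> \<theta>' n \<omega>) ` {1..L}) > (1 + \<epsilon>) * I \<theta> \<theta>'})
      \<longlonglongrightarrow> 0"
    and alpha_range: "\<And>k i j. i \<le> N \<Longrightarrow> j \<le> N \<Longrightarrow> i \<noteq> j \<Longrightarrow> 0 < \<alpha> k i j \<and> \<alpha> k i j < 1"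
    and alpha_max_lim: "(\<lambda>k. alpha_max N (\<alpha> k)) \<longlonglongrightarrow> 0"
begin

abbreviation tests :: "nat \<Rightarrow> (('w \<Rightarrow> enat) \<times> ('w \<Rightarrow> nat)) set" where
  "tests k \<equiv> test_class \<Omega> S X N \<Theta> P (\<alpha> k)"

lemma psi_mono: "0 \<le> x \<Longrightarrow> x \<le> y \<Longrightarrow> \<psi> x \<le> \<psi> y"
  using strict_mono_onD[OF psi_strict_mono, of x y] by (cases "x = y") auto

lemma psi_pos: "0 < x \<Longrightarrow> 0 < \<psi> x"
  using strict_mono_onD[OF psi_strict_mono, of 0 x] psi_nonneg[of 0] by simp

lemma psi_nat_floor_Psi_le: "0 \<le> y \<Longrightarrow> \<psi> (real (nat \<lfloor>\<Psi> y\<rfloor>)) \<le> y"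
  using psi_mono[of "real (nat \<lfloor>\<Psi> y\<rfloor>)" "\<Psi> y"] psi_Psi[of y]
  by (simp add: of_nat_floor)

lemma tests_nonempty: "(\<lambda>_. \<infinity>, \<lambda>_. 0) \<in> tests k"
  using alpha_range
  by (auto simp: test_class_def is_test_def accept_event_def sets.empty_sets less_imp_le)

lemma accept_event_le_alpha:
  "D \<in> tests k \<Longrightarrow> i \<le> N \<Longrightarrow> j \<le> N \<Longrightarrow> i \<noteq> j \<Longrightarrow> \<theta> \<in> \<Theta> i \<Longrightarrow>
    measure (P \<theta>) (accept_event \<Omega> (fst D) (snd D) j) \<le> \<alpha> k i j"
  unfolding test_class_def by auto

lemma is_test_tests: "D \<in> tests k \<Longrightarrow> is_test \<Omega> S X N (fst D) (snd D)"
  unfolding test_class_def by auto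

lemma alpha_tendsto_0:
  assumes "i \<le> N" "j \<le> N" "i \<noteq> j"
  shows "(\<lambda>k. \<alpha> k i j) \<longlonglongrightarrow> 0"
proof (rule tendsto_sandwich[OF _ _ tendsto_const alpha_max_lim])
  have "finite {\<alpha> k i j | i j. i \<le> N \<and> j \<le> N \<and> i \<noteq> j}" for k
    by (rule finite_subset[of _ "(\<lambda>(i, j). \<alpha> k i j) ` ({0..N} \<times> {0..N})"]) auto
  then show "\<forall>\<^sub>F k in sequentially. \<alpha> k i j \<le> alpha_max N (\<alpha> k)"
    using assms unfolding alpha_max_def by (intro always_eventually allI Max_ge) auto
  show "\<forall>\<^sub>F k in sequentially. 0 \<le> \<alpha> k i j"
    using alpha_range[OF assms] by (simp add: less_imp_le)
qed

lemma abs_ln_alpha: "i \<le> N \<Longrightarrow> j \<le> N \<Longrightarrow> i \<noteq> j \<Longrightarrow> \<bar>ln (\<alpha> k i j)\<bar> = - ln (\<alpha> k i j)"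
  using alpha_range[of i j k] by simp

lemma abs_ln_alpha_at_top:
  assumes "i \<le> N" "j \<le> N" "i \<noteq> j"
  shows "filterlim (\<lambda>k. \<bar>ln (\<alpha> k i j)\<bar>) at_top sequentially"
proof -
  have "filterlim (\<lambda>k. \<alpha> k i j) (at_right 0) sequentially"
    using alpha_tendsto_0[OF assms] alpha_range[OF assms] by (intro tendsto_imp_filterlim_at_right) auto
  then have "filterlim (\<lambda>k. ln (\<alpha> k i j)) at_bot sequentially"
    by (rule filterlim_compose[OF ln_at_0])
  then have "filterlim (\<lambda>k. - ln (\<alpha> k i j)) at_top sequentially"
    unfolding filterlim_uminus_at_bot .
  then show ?thesis
    using abs_ln_alpha[OF assms] by simp
qed

lemma prob_stop_accept_le_alpha:
  assumes \<theta>: "\<theta> \<in> \<Theta>all" and v: "v \<in> \<Theta> j" and ij: "i \<le> N" "j \<le> N" "j \<noteq> i"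
    and D: "D \<in> tests k" and L: "1 \<le> L" and \<kappa>: "0 \<le> \<kappa>"
  shows "measure (P \<theta>) {\<omega> \<in> space \<Omega>. fst D \<omega> \<le> enat L \<and> snd D \<omega> = i}
           \<le> exp (\<kappa> * \<psi> (real L)) * \<alpha> k j i
             + measure (P \<theta>) {\<omega> \<in> space \<Omega>.
                 (1 / \<psi> (real L)) * Max ((\<lambda>n. llr p X \<theta> v n \<omega>) ` {1..L}) > \<kappa>}"
proof -
  have \<psi>L: "0 < \<psi> (real L)"
    using L by (intro psi_pos) simp
  have set_eq: "{\<omega> \<in> space \<Omega>. \<kappa> * \<psi> (real L) < Max ((\<lambda>n. llr p X \<theta> v n \<omega>) ` {1..L})}
      = {\<omega> \<in> space \<Omega>. (1 / \<psi> (real L)) * Max ((\<lambda>n. llr p X \<theta> v n \<omega>) ` {1..L}) > \<kappa>}"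
    using \<psi>L by (auto simp: field_simps)
  have "exp (\<kappa> * \<psi> (real L)) * measure (P v) (accept_event \<Omega> (fst D) (snd D) i)
      \<le> exp (\<kappa> * \<psi> (real L)) * \<alpha> k j i"
    using accept_event_le_alpha[OF D ij(2,1) ij(3) v] by simp
  then show ?thesis
    using prob_stop_accept_le[OF \<theta> subsetD[OF Theta_subset[OF ij(2)] v] is_test_tests[OF D] L
        mult_nonneg_nonneg[OF \<kappa> less_imp_le[OF \<psi>L]], of i]
    unfolding set_eq by linarith
qed

lemma obtain_near_minimizer:
  assumes \<theta>: "\<theta> \<in> \<Theta>all" and j: "j \<le> N" and \<theta>_j: "\<theta> \<notin> \<Theta> j"
    and Ij: "0 < Ij I \<Theta> j \<theta>" and c: "1 < c"
  obtains v where "v \<in> \<Theta> j" "I \<theta> v < c * Ij I \<Theta> j \<theta>"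
proof -
  have "bdd_below ((\<lambda>v. I \<theta> v) ` \<Theta> j)"
    using I_pos[OF \<theta>] Theta_subset[OF j] \<theta>_j by (intro bdd_belowI2[of _ 0]) (auto intro: less_imp_le)
  moreover have "(INF v\<in>\<Theta> j. I \<theta> v) < c * Ij I \<Theta> j \<theta>"
    using Ij c unfolding Ij_def by simp
  ultimately show ?thesis
    using that Theta_nonempty[OF j] by (auto simp: cINF_less_iff)
qed

lemma exp_psi_floor_Psi_le_powr:
  assumes a: "0 < a" "a \<le> 1" and c: "0 < c" and \<epsilon>: "\<epsilon> \<le> 1"
    and \<kappa>: "0 \<le> \<kappa>" "\<kappa> * (1 - \<epsilon>) \<le> (1 - \<eta>) * c"
  shows "exp (\<kappa> * \<psi> (real (nat \<lfloor>\<Psi> ((1 - \<epsilon>) * (\<bar>ln a\<bar> / c))\<rfloor>))) * a \<le> a powr \<eta>"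
proof -
  have t: "0 \<le> (1 - \<epsilon>) * (\<bar>ln a\<bar> / c)"
    using \<epsilon> c by simp
  have "\<kappa> * \<psi> (real (nat \<lfloor>\<Psi> ((1 - \<epsilon>) * (\<bar>ln a\<bar> / c))\<rfloor>)) \<le> \<kappa> * (1 - \<epsilon>) / c * \<bar>ln a\<bar>"
    using mult_left_mono[OF psi_nat_floor_Psi_le[OF t] \<kappa>(1)] by simp
  also have "\<dots> \<le> (1 - \<eta>) * \<bar>ln a\<bar>"
    using \<kappa>(2) c by (intro mult_right_mono) (simp_all add: divide_le_eq)
  also have "\<dots> = (\<eta> - 1) * ln a"
    using a by (simp add: algebra_simps)
  finally have "exp (\<kappa> * \<psi> (real (nat \<lfloor>\<Psi> ((1 - \<epsilon>) * (\<bar>ln a\<bar> / c))\<rfloor>))) * a \<le> exp ((\<eta> - 1) * ln a + ln a)"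
    using a by (simp add: exp_add)
  then show ?thesis
    using a by (simp add: powr_def algebra_simps)
qed

lemma nat_floor_Psi_at_top:
  "filterlim t at_top F \<Longrightarrow> filterlim (\<lambda>k. nat \<lfloor>\<Psi> (t k)\<rfloor>) at_top F"
  by (rule filterlim_compose[OF filterlim_nat_sequentially
        filterlim_compose[OF filterlim_floor_sequentially filterlim_compose[OF Psi_at_top]]])

lemma early_stop_accept_vanishes:
  assumes \<theta>: "\<theta> \<in> \<Theta>all" and ij: "i \<le> N" "j \<le> N" "j \<noteq> i" and \<theta>_j: "\<theta> \<notin> \<Theta> j"
    and Ij: "0 < Ij I \<Theta> j \<theta>" and \<epsilon>: "0 < \<epsilon>" "\<epsilon> < 1"
  shows "\<exists>b. b \<longlonglongrightarrow> 0 \<and> (\<forall>k. \<forall>D\<in>tests k. measure (P \<theta>) {\<omega> \<in> space \<Omega>.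
           fst D \<omega> \<le> enat (nat \<lfloor>\<Psi> ((1 - \<epsilon>) * (\<bar>ln (\<alpha> k j i)\<bar> / Ij I \<Theta> j \<theta>))\<rfloor>)
           \<and> snd D \<omega> = i} \<le> b k)"
proof -
  define c where "c = Ij I \<Theta> j \<theta>"
  obtain \<delta> where \<delta>: "0 < \<delta>" "(1 + \<delta>)\<^sup>2 * (1 - \<epsilon>) < 1"
    using ex_pos_sq_margin[OF \<epsilon>(1)] by blast
  define \<eta> where "\<eta> = 1 - (1 + \<delta>)\<^sup>2 * (1 - \<epsilon>)"
  obtain v where v: "v \<in> \<Theta> j" "I \<theta> v < (1 + \<delta>) * c"
    using obtain_near_minimizer[OF \<theta> ij(2) \<theta>_j Ij, of "1 + \<delta>"] \<delta> unfolding c_def by auto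
  have v_all: "v \<in> \<Theta>all" and \<theta>_v: "\<theta> \<noteq> v"
    using v(1) Theta_subset[OF ij(2)] \<theta>_j by auto
  define \<kappa> where "\<kappa> = (1 + \<delta>) * I \<theta> v"
  have \<kappa>: "0 \<le> \<kappa>" "\<kappa> * (1 - \<epsilon>) \<le> (1 - \<eta>) * c"
    using I_pos[OF \<theta> v_all \<theta>_v] v(2) \<delta>(1) \<epsilon>(2)
    by (simp_all add: \<kappa>_def \<eta>_def power2_eq_square mult_right_mono)
  define M where "M k = nat \<lfloor>\<Psi> ((1 - \<epsilon>) * (\<bar>ln (\<alpha> k j i)\<bar> / c))\<rfloor>" for k
  define tail where "tail L = measure (P \<theta>) {\<omega> \<in> space \<Omega>.
      (1 / \<psi> (real L)) * Max ((\<lambda>n. llr p X \<theta> v n \<omega>) ` {1..L}) > \<kappa>}" for L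
  define b where "b k = (if 1 \<le> M k then \<alpha> k j i powr \<eta> + tail (M k) else 1)" for k
  have \<alpha>: "0 < \<alpha> k j i" "\<alpha> k j i \<le> 1" for k
    using alpha_range[of j i k] ij by simp_all
  have "measure (P \<theta>) {\<omega> \<in> space \<Omega>. fst D \<omega> \<le> enat (M k) \<and> snd D \<omega> = i} \<le> b k"
    if D: "D \<in> tests k" for k D
  proof (cases "1 \<le> M k")
    case True
    have "exp (\<kappa> * \<psi> (real (M k))) * \<alpha> k j i \<le> \<alpha> k j i powr \<eta>"
      unfolding M_def using \<epsilon> Ij by (intro exp_psi_floor_Psi_le_powr[OF \<alpha> _ _ \<kappa>]) (auto simp: c_def)
    then show ?thesis
      using prob_stop_accept_le_alpha[OF \<theta> v(1) ij D True \<kappa>(1)] True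
      unfolding b_def tail_def by simp
  qed (simp add: b_def prob_space.prob_le_1[OF prob_space_P[OF \<theta>]])
  moreover have "b \<longlonglongrightarrow> 0"
  proof -
    have "filterlim (\<lambda>k. ((1 - \<epsilon>) / c) * \<bar>ln (\<alpha> k j i)\<bar>) at_top sequentially"
      using \<epsilon> Ij abs_ln_alpha_at_top[OF ij(2,1) ij(3)] unfolding c_def
      by (intro filterlim_tendsto_pos_mult_at_top[OF tendsto_const]) auto
    then have M: "filterlim M at_top sequentially"
      unfolding M_def by (intro nat_floor_Psi_at_top) simp
    have "0 < \<eta>" using \<delta>(2) by (simp add: \<eta>_def)
    then have "(\<lambda>k. \<alpha> k j i powr \<eta>) \<longlonglongrightarrow> 0"
      using alpha_tendsto_0[OF ij(2,1) ij(3)] \<alpha>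
      by (intro tendsto_zero_powrI[OF _ tendsto_const] always_eventually allI) (auto intro: less_imp_le)
    moreover have "tail \<longlonglongrightarrow> 0"
      unfolding tail_def \<kappa>_def using right_tail[OF \<delta>(1) \<theta> v_all \<theta>_v] .
    ultimately have "(\<lambda>k. \<alpha> k j i powr \<eta> + tail (M k)) \<longlonglongrightarrow> 0"
      by (intro tendsto_add_zero filterlim_compose[OF _ M])
    moreover have "eventually (\<lambda>k. \<alpha> k j i powr \<eta> + tail (M k) = b k) sequentially"
      using M unfolding filterlim_at_top b_def by (auto elim: eventually_mono)
    ultimately show ?thesis by (rule Lim_transform_eventually)
  qed
  ultimately show ?thesis
    unfolding M_def c_def by blast
qed

definition separated_except :: "nat \<Rightarrow> 'p \<Rightarrow> bool" where
  "separated_except i \<theta> \<longleftrightarrow> \<theta> \<in> \<Theta>all \<and> (\<forall>j\<in>{0..N} - {i}. \<theta> \<notin> \<Theta> j \<and> 0 < Ij I \<Theta> j \<theta>)"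

lemma separated_except_Theta:
  assumes i: "i \<le> N" and \<theta>: "\<theta> \<in> \<Theta> i"
  shows "separated_except i \<theta>"
proof -
  have "\<theta> \<notin> \<Theta> j" if "j \<in> {0..N} - {i}" for j
    using disjoint_family_onD[OF Theta_disjoint, of i j] that i \<theta> by auto
  then show ?thesis
    using Theta_subset[OF i] \<theta> Ij_pos[OF i] unfolding separated_except_def by auto
qed

lemma separated_except_Theta_in:
  assumes \<theta>: "\<theta> \<in> \<Theta>in"
  shows "separated_except i \<theta>"
proof -
  have "\<theta> \<notin> \<Theta> j" if "j \<le> N" for j
    using Theta_in_disjoint[OF that] \<theta> by auto
  then show ?thesis
    using Theta_in_subset \<theta> Ij_pos_in unfolding separated_except_def by auto
qed

lemma atLeastAtMost_minus_nonempty: "i \<le> N \<Longrightarrow> {0..N} - {i} \<noteq> {}"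
  using N_pos by (cases "i = 0") auto

lemma Fbound_nonneg:
  assumes i: "i \<le> N" and sep: "separated_except i \<theta>" and \<epsilon>: "\<epsilon> \<le> 1"
  shows "0 \<le> Fbound \<Psi> I \<Theta> N i \<theta> \<epsilon> a"
proof -
  obtain j where j: "j \<in> {0..N} - {i}" using atLeastAtMost_minus_nonempty[OF i] by blast
  have "0 \<le> \<bar>ln (a j i)\<bar> / Ij I \<Theta> j \<theta>"
    using sep j unfolding separated_except_def by (simp add: less_imp_le)
  also have "\<dots> \<le> Max ((\<lambda>j. \<bar>ln (a j i)\<bar> / Ij I \<Theta> j \<theta>) ` ({0..N} - {i}))"
    using j by (intro Max_ge) auto
  finally show ?thesis
    unfolding Fbound_def using \<epsilon> psi_Psi by simp
qed

lemma early_stop_accept_vanishes_Fbound: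
  assumes i: "i \<le> N" and sep: "separated_except i \<theta>" and \<epsilon>: "0 < \<epsilon>" "\<epsilon> < 1"
  shows "\<exists>b. b \<longlonglongrightarrow> 0 \<and> (\<forall>k. \<forall>D\<in>tests k. \<forall>m. real m \<le> Fbound \<Psi> I \<Theta> N i \<theta> \<epsilon> (\<alpha> k) \<longrightarrow>
           measure (P \<theta>) {\<omega> \<in> space \<Omega>. fst D \<omega> \<le> enat m \<and> snd D \<omega> = i} \<le> b k)"
proof -
  define J where "J = {0..N} - {i}"
  define r where "r k j = \<bar>ln (\<alpha> k j i)\<bar> / Ij I \<Theta> j \<theta>" for k j
  have \<theta>: "\<theta> \<in> \<Theta>all" and J: "\<And>j. j \<in> J \<Longrightarrow> \<theta> \<notin> \<Theta> j \<and> 0 < Ij I \<Theta> j \<theta>"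
    using sep unfolding separated_except_def J_def by auto
  have "\<forall>j\<in>J. \<exists>b. b \<longlonglongrightarrow> 0 \<and> (\<forall>k. \<forall>D\<in>tests k. measure (P \<theta>) {\<omega> \<in> space \<Omega>.
           fst D \<omega> \<le> enat (nat \<lfloor>\<Psi> ((1 - \<epsilon>) * r k j)\<rfloor>) \<and> snd D \<omega> = i} \<le> b k)"
  proof
    fix j assume j: "j \<in> J"
    then show "\<exists>b. b \<longlonglongrightarrow> 0 \<and> (\<forall>k. \<forall>D\<in>tests k. measure (P \<theta>) {\<omega> \<in> space \<Omega>.
           fst D \<omega> \<le> enat (nat \<lfloor>\<Psi> ((1 - \<epsilon>) * r k j)\<rfloor>) \<and> snd D \<omega> = i} \<le> b k)"
      using early_stop_accept_vanishes[OF \<theta> i _ _ _ _ \<epsilon>, of j] J[OF j]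
      unfolding J_def r_def by auto
  qed
  from bchoice[OF this] obtain B where B: "\<forall>j\<in>J. B j \<longlonglongrightarrow> 0 \<and> (\<forall>k. \<forall>D\<in>tests k. measure (P \<theta>)
      {\<omega> \<in> space \<Omega>. fst D \<omega> \<le> enat (nat \<lfloor>\<Psi> ((1 - \<epsilon>) * r k j)\<rfloor>) \<and> snd D \<omega> = i} \<le> B j k)" ..
  \<comment> \<open>The maximising \<open>j\<close> depends on \<open>k\<close>; summing over all \<open>j\<close> gives one bound for every \<open>k\<close>.\<close>
  define b where "b k = (\<Sum>j\<in>J. \<bar>B j k\<bar>)" for k
  have "b \<longlonglongrightarrow> 0"
    unfolding b_def using B by (intro tendsto_null_sum tendsto_rabs_zero) auto
  moreover have "measure (P \<theta>) {\<omega> \<in> space \<Omega>. fst D \<omega> \<le> enat m \<and> snd D \<omega> = i} \<le> b k"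
    if D: "D \<in> tests k" and m: "real m \<le> Fbound \<Psi> I \<Theta> N i \<theta> \<epsilon> (\<alpha> k)" for k D m
  proof -
    interpret P\<theta>: prob_space "P \<theta>" by (rule prob_space_P[OF \<theta>])
    have "Max (r k ` J) \<in> r k ` J"
      using atLeastAtMost_minus_nonempty[OF i] unfolding J_def by (intro Max_in) auto
    then obtain j where j: "j \<in> J" "Max (r k ` J) = r k j" by auto
    have "real m \<le> \<Psi> ((1 - \<epsilon>) * r k j)"
      using m j(2) unfolding Fbound_def J_def r_def by simp
    then have "m \<le> nat \<lfloor>\<Psi> ((1 - \<epsilon>) * r k j)\<rfloor>"
      by (rule le_nat_floor)
    then have "measure (P \<theta>) {\<omega> \<in> space \<Omega>. fst D \<omega> \<le> enat m \<and> snd D \<omega> = i}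
        \<le> measure (P \<theta>) {\<omega> \<in> space \<Omega>. fst D \<omega> \<le> enat (nat \<lfloor>\<Psi> ((1 - \<epsilon>) * r k j)\<rfloor>) \<and> snd D \<omega> = i}"
      using sets_stop_by_accept[OF is_test_tests[OF D]] sets_P[OF \<theta>]
      by (intro P\<theta>.finite_measure_mono) (auto intro: order_trans)
    also have "\<dots> \<le> \<bar>B j k\<bar>"
      using B j(1) D by fastforce
    also have "\<dots> \<le> b k"
      unfolding b_def using j(1) by (intro member_le_sum) (auto simp: J_def)
    finally show ?thesis .
  qed
  ultimately show ?thesis by blast
qed

lemma prob_T_gt:
  assumes \<theta>: "\<theta> \<in> \<Theta>all" and test: "is_test \<Omega> S X N T d" and x: "0 \<le> x"
  shows "measure (P \<theta>) {\<omega> \<in> space \<Omega>. T_gt T x \<omega>}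
           = 1 - measure (P \<theta>) {\<omega> \<in> space \<Omega>. T \<omega> \<le> enat (nat \<lfloor>x\<rfloor>)}"
    and "{\<omega> \<in> space \<Omega>. T_gt T x \<omega>} \<in> sets \<Omega>"
proof -
  have eq: "{\<omega> \<in> space \<Omega>. T_gt T x \<omega>} = space \<Omega> - {\<omega> \<in> space \<Omega>. T \<omega> \<le> enat (nat \<lfloor>x\<rfloor>)}"
    by (auto simp: T_gt_iff[OF x])
  show "measure (P \<theta>) {\<omega> \<in> space \<Omega>. T_gt T x \<omega>}
      = 1 - measure (P \<theta>) {\<omega> \<in> space \<Omega>. T \<omega> \<le> enat (nat \<lfloor>x\<rfloor>)}"
    unfolding eq using sets_stop_by[OF test] sets_P[OF \<theta>] space_P[OF \<theta>]
    by (metis prob_space.prob_compl prob_space_P[OF \<theta>])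
  show "{\<omega> \<in> space \<Omega>. T_gt T x \<omega>} \<in> sets \<Omega>"
    unfolding eq using sets_stop_by[OF test] by auto
qed

lemma INF_prob_T_gt_tendsto_1:
  assumes \<theta>: "\<theta> \<in> \<Theta>all" and x: "\<And>k. 0 \<le> x k" and c: "c \<longlonglongrightarrow> 0"
    and bound: "\<And>k D. D \<in> tests k \<Longrightarrow>
      measure (P \<theta>) {\<omega> \<in> space \<Omega>. fst D \<omega> \<le> enat (nat \<lfloor>x k\<rfloor>)} \<le> c k"
  shows "(\<lambda>k. INF D\<in>tests k. measure (P \<theta>) {\<omega> \<in> space \<Omega>. T_gt (fst D) (x k) \<omega>}) \<longlonglongrightarrow> 1"
proof (rule INF_tendsto_1[OF _ _ c])
  show "tests k \<noteq> {}" for k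
    using tests_nonempty by blast
  fix k D assume D: "D \<in> tests k"
  show "1 - c k \<le> measure (P \<theta>) {\<omega> \<in> space \<Omega>. T_gt (fst D) (x k) \<omega>}
      \<and> measure (P \<theta>) {\<omega> \<in> space \<Omega>. T_gt (fst D) (x k) \<omega>} \<le> 1"
    using bound[OF D] prob_T_gt(1)[OF \<theta> is_test_tests[OF D] x]
      prob_space.prob_le_1[OF prob_space_P[OF \<theta>]] by simp
qed

lemma prob_stop_by_le_sum:
  assumes \<theta>: "\<theta> \<in> \<Theta>all" and test: "is_test \<Omega> S X N T d"
  shows "measure (P \<theta>) {\<omega> \<in> space \<Omega>. T \<omega> \<le> enat m}
           \<le> (\<Sum>i\<in>{0..N}. measure (P \<theta>) {\<omega> \<in> space \<Omega>. T \<omega> \<le> enat m \<and> d \<omega> = i})"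
  unfolding stop_by_eq_Union[OF test]
  using sets_stop_by_accept[OF test] sets_P[OF \<theta>] by (intro measure_UNION_le) auto

lemma prob_stop_by_accept_le_alpha:
  assumes D: "D \<in> tests k" and ij: "i \<le> N" "j \<le> N" "i \<noteq> j" and \<theta>: "\<theta> \<in> \<Theta> i"
  shows "measure (P \<theta>) {\<omega> \<in> space \<Omega>. fst D \<omega> \<le> enat m \<and> snd D \<omega> = j} \<le> \<alpha> k i j"
proof -
  have \<theta>_all: "\<theta> \<in> \<Theta>all" using Theta_subset[OF ij(1)] \<theta> by blast
  interpret P\<theta>: prob_space "P \<theta>" by (rule prob_space_P[OF \<theta>_all])
  have "measure (P \<theta>) {\<omega> \<in> space \<Omega>. fst D \<omega> \<le> enat m \<and> snd D \<omega> = j}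
      \<le> measure (P \<theta>) (accept_event \<Omega> (fst D) (snd D) j)"
    using sets_accept_event[OF is_test_tests[OF D]] sets_P[OF \<theta>_all]
    by (intro P\<theta>.finite_measure_mono) (auto simp: accept_event_def enat_le_enat_iff_exists)
  also have "\<dots> \<le> \<alpha> k i j"
    by (rule accept_event_le_alpha[OF D ij \<theta>])
  finally show ?thesis .
qed

lemma INF_prob_late_stop_tendsto_1:
  assumes i: "i \<le> N" and \<theta>: "\<theta> \<in> \<Theta> i" and \<epsilon>: "0 < \<epsilon>" "\<epsilon> < 1"
  shows "(\<lambda>k. INF D\<in>tests k. measure (P \<theta>)
           {\<omega> \<in> space \<Omega>. T_gt (fst D) (Fbound \<Psi> I \<Theta> N i \<theta> \<epsilon> (\<alpha> k)) \<omega>}) \<longlonglongrightarrow> 1"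
proof -
  define J where "J = {0..N} - {i}"
  have sep: "separated_except i \<theta>" by (rule separated_except_Theta[OF i \<theta>])
  obtain b where b_lim: "b \<longlonglongrightarrow> 0" and b: "\<forall>k. \<forall>D\<in>tests k. \<forall>m.
      real m \<le> Fbound \<Psi> I \<Theta> N i \<theta> \<epsilon> (\<alpha> k) \<longrightarrow>
      measure (P \<theta>) {\<omega> \<in> space \<Omega>. fst D \<omega> \<le> enat m \<and> snd D \<omega> = i} \<le> b k"
    using early_stop_accept_vanishes_Fbound[OF i sep \<epsilon>] by blast
  show ?thesis
  proof (rule INF_prob_T_gt_tendsto_1)
    show "\<theta> \<in> \<Theta>all" using sep unfolding separated_except_def by blast
    show "0 \<le> Fbound \<Psi> I \<Theta> N i \<theta> \<epsilon> (\<alpha> k)" for k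
      using Fbound_nonneg[OF i sep] \<epsilon> by simp
    show "(\<lambda>k. b k + (\<Sum>j\<in>J. \<alpha> k i j)) \<longlonglongrightarrow> 0"
      using b_lim alpha_tendsto_0 i unfolding J_def by (intro tendsto_add_zero tendsto_null_sum) auto
    fix k D assume D: "D \<in> tests k"
    define m where "m = nat \<lfloor>Fbound \<Psi> I \<Theta> N i \<theta> \<epsilon> (\<alpha> k)\<rfloor>"
    have "measure (P \<theta>) {\<omega> \<in> space \<Omega>. fst D \<omega> \<le> enat m}
        \<le> (\<Sum>i'\<in>{0..N}. measure (P \<theta>) {\<omega> \<in> space \<Omega>. fst D \<omega> \<le> enat m \<and> snd D \<omega> = i'})"
      using \<open>\<theta> \<in> \<Theta>all\<close> by (rule prob_stop_by_le_sum[OF _ is_test_tests[OF D]])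
    also have "\<dots> = measure (P \<theta>) {\<omega> \<in> space \<Omega>. fst D \<omega> \<le> enat m \<and> snd D \<omega> = i}
        + (\<Sum>j\<in>J. measure (P \<theta>) {\<omega> \<in> space \<Omega>. fst D \<omega> \<le> enat m \<and> snd D \<omega> = j})"
      using i unfolding J_def by (subst sum.remove[of _ i]) auto
    also have "\<dots> \<le> b k + (\<Sum>j\<in>J. \<alpha> k i j)"
      using b D of_nat_floor[OF Fbound_nonneg[OF i sep, of \<epsilon>]] \<epsilon> i \<theta>
      by (intro add_mono sum_mono prob_stop_by_accept_le_alpha) (auto simp: m_def J_def)
    finally show "measure (P \<theta>) {\<omega> \<in> space \<Omega>. fst D \<omega> \<le> enat m} \<le> b k + (\<Sum>j\<in>J. \<alpha> k i j)" .
  qed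
qed

lemma Min_Fbound_nonneg:
  "(\<And>i. i \<le> N \<Longrightarrow> separated_except i \<theta>) \<Longrightarrow> \<epsilon> \<le> 1 \<Longrightarrow>
    0 \<le> Min ((\<lambda>i. Fbound \<Psi> I \<Theta> N i \<theta> \<epsilon> a) ` {0..N})"
  using Fbound_nonneg by (subst Min_ge_iff) auto

lemma INF_prob_late_stop_tendsto_1_indifference:
  assumes \<theta>: "\<theta> \<in> \<Theta>in" and \<epsilon>: "0 < \<epsilon>" "\<epsilon> < 1"
  shows "(\<lambda>k. INF D\<in>tests k. measure (P \<theta>) {\<omega> \<in> space \<Omega>.
           T_gt (fst D) (Min ((\<lambda>i. Fbound \<Psi> I \<Theta> N i \<theta> \<epsilon> (\<alpha> k)) ` {0..N})) \<omega>}) \<longlonglongrightarrow> 1"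
proof -
  have sep: "separated_except i \<theta>" for i by (rule separated_except_Theta_in[OF \<theta>])
  have "\<forall>i\<in>{0..N}. \<exists>b. b \<longlonglongrightarrow> 0 \<and> (\<forall>k. \<forall>D\<in>tests k. \<forall>m.
      real m \<le> Fbound \<Psi> I \<Theta> N i \<theta> \<epsilon> (\<alpha> k) \<longrightarrow>
      measure (P \<theta>) {\<omega> \<in> space \<Omega>. fst D \<omega> \<le> enat m \<and> snd D \<omega> = i} \<le> b k)"
    using early_stop_accept_vanishes_Fbound[OF _ sep \<epsilon>] by simp
  from bchoice[OF this] obtain B where B: "\<forall>i\<in>{0..N}. B i \<longlonglongrightarrow> 0 \<and> (\<forall>k. \<forall>D\<in>tests k. \<forall>m.
      real m \<le> Fbound \<Psi> I \<Theta> N i \<theta> \<epsilon> (\<alpha> k) \<longrightarrow>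
      measure (P \<theta>) {\<omega> \<in> space \<Omega>. fst D \<omega> \<le> enat m \<and> snd D \<omega> = i} \<le> B i k)" ..
  show ?thesis
  proof (rule INF_prob_T_gt_tendsto_1)
    show "\<theta> \<in> \<Theta>all" using Theta_in_subset \<theta> by blast
    show "0 \<le> Min ((\<lambda>i. Fbound \<Psi> I \<Theta> N i \<theta> \<epsilon> (\<alpha> k)) ` {0..N})" for k
      using Min_Fbound_nonneg sep \<epsilon> by simp
    show "(\<lambda>k. \<Sum>i\<in>{0..N}. B i k) \<longlonglongrightarrow> 0"
      using B by (intro tendsto_null_sum) auto
    fix k D assume D: "D \<in> tests k"
    define m where "m = nat \<lfloor>Min ((\<lambda>i. Fbound \<Psi> I \<Theta> N i \<theta> \<epsilon> (\<alpha> k)) ` {0..N})\<rfloor>"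
    have m: "real m \<le> Fbound \<Psi> I \<Theta> N i \<theta> \<epsilon> (\<alpha> k)" if "i \<le> N" for i
      using of_nat_floor[OF Min_Fbound_nonneg[OF sep, of \<epsilon> "\<alpha> k"]] \<epsilon> Min_le[of _ "Fbound \<Psi> I \<Theta> N i \<theta> \<epsilon> (\<alpha> k)"] that
      unfolding m_def by fastforce
    have "measure (P \<theta>) {\<omega> \<in> space \<Omega>. fst D \<omega> \<le> enat m}
        \<le> (\<Sum>i\<in>{0..N}. measure (P \<theta>) {\<omega> \<in> space \<Omega>. fst D \<omega> \<le> enat m \<and> snd D \<omega> = i})"
      using \<open>\<theta> \<in> \<Theta>all\<close> by (rule prob_stop_by_le_sum[OF _ is_test_tests[OF D]])
    also have "\<dots> \<le> (\<Sum>i\<in>{0..N}. B i k)"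
      using B D m by (intro sum_mono) auto
    finally show "measure (P \<theta>) {\<omega> \<in> space \<Omega>. fst D \<omega> \<le> enat m} \<le> (\<Sum>i\<in>{0..N}. B i k)" .
  qed
qed

lemma INF_moment_ge:
  assumes \<theta>: "\<theta> \<in> \<Theta>all" and x: "0 \<le> x" and r: "0 \<le> r"
  shows "ennreal (x powr r) * ennreal (INF D\<in>tests k. measure (P \<theta>) {\<omega> \<in> space \<Omega>. T_gt (fst D) x \<omega>})
           \<le> (INF D\<in>tests k. T_moment (P \<theta>) (fst D) r)"
proof (rule INF_greatest)
  fix D assume D: "D \<in> tests k"
  interpret P\<theta>: prob_space "P \<theta>" by (rule prob_space_P[OF \<theta>])
  have A: "{\<omega> \<in> space \<Omega>. T_gt (fst D) x \<omega>} \<in> sets (P \<theta>)"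
    using prob_T_gt(2)[OF \<theta> is_test_tests[OF D] x] sets_P[OF \<theta>] by simp
  have "(INF D\<in>tests k. measure (P \<theta>) {\<omega> \<in> space \<Omega>. T_gt (fst D) x \<omega>})
      \<le> measure (P \<theta>) {\<omega> \<in> space \<Omega>. T_gt (fst D) x \<omega>}"
    using D by (intro cINF_lower bdd_belowI2[of _ 0]) auto
  then have "ennreal (x powr r) * ennreal (INF D\<in>tests k. measure (P \<theta>) {\<omega> \<in> space \<Omega>. T_gt (fst D) x \<omega>})
      \<le> ennreal (x powr r) * emeasure (P \<theta>) {\<omega> \<in> space (P \<theta>). T_gt (fst D) x \<omega>}"
    using A space_P[OF \<theta>] by (simp add: P\<theta>.emeasure_eq_measure mult_left_mono ennreal_leI)
  also have "\<dots> \<le> T_moment (P \<theta>) (fst D) r"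
    using A space_P[OF \<theta>] x r by (intro T_moment_ge) auto
  finally show "ennreal (x powr r) * ennreal (INF D\<in>tests k. measure (P \<theta>) {\<omega> \<in> space \<Omega>. T_gt (fst D) x \<omega>})
      \<le> T_moment (P \<theta>) (fst D) r" .
qed

lemma Fbound_argument_at_top:
  assumes i: "i \<le> N" and sep: "separated_except i \<theta>"
  shows "filterlim (\<lambda>k. Max ((\<lambda>j. \<bar>ln (\<alpha> k j i)\<bar> / Ij I \<Theta> j \<theta>) ` ({0..N} - {i}))) at_top sequentially"
proof -
  obtain j where j: "j \<in> {0..N} - {i}" using atLeastAtMost_minus_nonempty[OF i] by blast
  have Ij: "0 < Ij I \<Theta> j \<theta>" using sep j unfolding separated_except_def by blast
  have "filterlim (\<lambda>k. (1 / Ij I \<Theta> j \<theta>) * \<bar>ln (\<alpha> k j i)\<bar>) at_top sequentially"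
    using Ij abs_ln_alpha_at_top[of j i] i j
    by (intro filterlim_tendsto_pos_mult_at_top[OF tendsto_const]) auto
  then show ?thesis
  proof (rule filterlim_at_top_mono)
    show "\<forall>\<^sub>F k in sequentially. 1 / Ij I \<Theta> j \<theta> * \<bar>ln (\<alpha> k j i)\<bar>
        \<le> Max ((\<lambda>j. \<bar>ln (\<alpha> k j i)\<bar> / Ij I \<Theta> j \<theta>) ` ({0..N} - {i}))"
      using j by (intro always_eventually allI Max_ge) auto
  qed
qed

lemma Fbound_eventually_ge:
  assumes s: "s < 1"
  obtains \<epsilon> where "0 < \<epsilon>" "\<epsilon> < 1"
    "\<And>i \<theta>. i \<le> N \<Longrightarrow> separated_except i \<theta> \<Longrightarrow>
       eventually (\<lambda>k. s * Fbound \<Psi> I \<Theta> N i \<theta> 0 (\<alpha> k) \<le> Fbound \<Psi> I \<Theta> N i \<theta> \<epsilon> (\<alpha> k)) sequentially"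
proof -
  obtain \<epsilon> where \<epsilon>: "0 < \<epsilon>" "\<epsilon> < 1"
    and ev: "eventually (\<lambda>t. s * \<Psi> t \<le> \<Psi> ((1 - \<epsilon>) * t)) at_top"
    using regularly_varying_lower_bound[OF Psi_at_top Psi_regular s] by blast
  show ?thesis
  proof (rule that[OF \<epsilon>])
    fix i \<theta> assume "i \<le> N" "separated_except i \<theta>"
    from filterlim_iff[THEN iffD1, OF Fbound_argument_at_top[OF this], rule_format, OF ev]
    show "eventually (\<lambda>k. s * Fbound \<Psi> I \<Theta> N i \<theta> 0 (\<alpha> k) \<le> Fbound \<Psi> I \<Theta> N i \<theta> \<epsilon> (\<alpha> k)) sequentially"
      unfolding Fbound_def by simp
  qed
qed

lemma Min_Fbound_eventually_ge:
  assumes s: "0 < s" "s < 1"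
  obtains \<epsilon> where "0 < \<epsilon>" "\<epsilon> < 1"
    "\<And>\<theta>. (\<And>i. i \<le> N \<Longrightarrow> separated_except i \<theta>) \<Longrightarrow>
       eventually (\<lambda>k. s * Min ((\<lambda>i. Fbound \<Psi> I \<Theta> N i \<theta> 0 (\<alpha> k)) ` {0..N})
         \<le> Min ((\<lambda>i. Fbound \<Psi> I \<Theta> N i \<theta> \<epsilon> (\<alpha> k)) ` {0..N})) sequentially"
proof -
  obtain \<epsilon> where \<epsilon>: "0 < \<epsilon>" "\<epsilon> < 1" and ev: "\<And>i \<theta>. i \<le> N \<Longrightarrow> separated_except i \<theta> \<Longrightarrow>
      eventually (\<lambda>k. s * Fbound \<Psi> I \<Theta> N i \<theta> 0 (\<alpha> k) \<le> Fbound \<Psi> I \<Theta> N i \<theta> \<epsilon> (\<alpha> k)) sequentially"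
    using Fbound_eventually_ge[OF s(2)] by metis
  show ?thesis
  proof (rule that[OF \<epsilon>])
    fix \<theta> assume sep: "\<And>i. i \<le> N \<Longrightarrow> separated_except i \<theta>"
    have "eventually (\<lambda>k. \<forall>i\<in>{0..N}.
        s * Fbound \<Psi> I \<Theta> N i \<theta> 0 (\<alpha> k) \<le> Fbound \<Psi> I \<Theta> N i \<theta> \<epsilon> (\<alpha> k)) sequentially"
    proof (subst eventually_ball_finite_distrib)
      show "\<forall>i\<in>{0..N}. eventually (\<lambda>k.
          s * Fbound \<Psi> I \<Theta> N i \<theta> 0 (\<alpha> k) \<le> Fbound \<Psi> I \<Theta> N i \<theta> \<epsilon> (\<alpha> k)) sequentially"
      proof
        fix i assume "i \<in> {0..N}"
        then show "eventually (\<lambda>k. s * Fbound \<Psi> I \<Theta> N i \<theta> 0 (\<alpha> k)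
            \<le> Fbound \<Psi> I \<Theta> N i \<theta> \<epsilon> (\<alpha> k)) sequentially"
          by (intro ev sep) auto
      qed
    qed simp
    then show "eventually (\<lambda>k. s * Min ((\<lambda>i. Fbound \<Psi> I \<Theta> N i \<theta> 0 (\<alpha> k)) ` {0..N})
        \<le> Min ((\<lambda>i. Fbound \<Psi> I \<Theta> N i \<theta> \<epsilon> (\<alpha> k)) ` {0..N})) sequentially"
    proof eventually_elim
      case (elim k)
      have "s * Min ((\<lambda>i. Fbound \<Psi> I \<Theta> N i \<theta> 0 (\<alpha> k)) ` {0..N})
          \<le> Fbound \<Psi> I \<Theta> N i \<theta> \<epsilon> (\<alpha> k)" if "i \<in> {0..N}" for i
        using elim that s(1) Min_le[of "(\<lambda>i. Fbound \<Psi> I \<Theta> N i \<theta> 0 (\<alpha> k)) ` {0..N}"]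
        by (meson finite_atLeastAtMost finite_imageI image_eqI mult_left_mono order.trans less_imp_le)
      then show ?case by (subst Min_ge_iff) auto
    qed
  qed
qed

lemma INF_moment_asymptotic_Theta:
  assumes i: "i \<le> N" and \<theta>: "\<theta> \<in> \<Theta> i" and r: "0 \<le> r"
  shows "\<exists>h. h \<longlonglongrightarrow> 0 \<and> (\<forall>k. ennreal (Fbound \<Psi> I \<Theta> N i \<theta> 0 (\<alpha> k) powr r * (1 + h k))
           \<le> (INF D\<in>tests k. T_moment (P \<theta>) (fst D) r))"
proof (rule moment_asymptotic_lower_bound[OF r,
      where H = "\<lambda>\<epsilon> k. Fbound \<Psi> I \<Theta> N i \<theta> \<epsilon> (\<alpha> k)"
        and q = "\<lambda>\<epsilon> k. INF D\<in>tests k. measure (P \<theta>)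
                   {\<omega> \<in> space \<Omega>. T_gt (fst D) (Fbound \<Psi> I \<Theta> N i \<theta> \<epsilon> (\<alpha> k)) \<omega>}"])
  have sep: "separated_except i \<theta>" by (rule separated_except_Theta[OF i \<theta>])
  then have \<theta>_all: "\<theta> \<in> \<Theta>all" unfolding separated_except_def by blast
  show "0 \<le> Fbound \<Psi> I \<Theta> N i \<theta> 0 (\<alpha> k)" for k
    using Fbound_nonneg[OF i sep] by simp
  show "0 \<le> Fbound \<Psi> I \<Theta> N i \<theta> \<epsilon> (\<alpha> k)" if "\<epsilon> < 1" for \<epsilon> k
    using Fbound_nonneg[OF i sep] that by simp
  show "\<exists>\<epsilon>>0. \<epsilon> < 1 \<and> eventually (\<lambda>k. s * Fbound \<Psi> I \<Theta> N i \<theta> 0 (\<alpha> k) \<le> Fbound \<Psi> I \<Theta> N i \<theta> \<epsilon> (\<alpha> k)) sequentially"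
    if "s < 1" for s
    using Fbound_eventually_ge[OF that] i sep by metis
  show "(\<lambda>k. INF D\<in>tests k. measure (P \<theta>) {\<omega> \<in> space \<Omega>. T_gt (fst D) (Fbound \<Psi> I \<Theta> N i \<theta> \<epsilon> (\<alpha> k)) \<omega>})
      \<longlonglongrightarrow> 1" if "0 < \<epsilon>" "\<epsilon> < 1" for \<epsilon>
    using INF_prob_late_stop_tendsto_1[OF i \<theta> that] .
  show "ennreal (Fbound \<Psi> I \<Theta> N i \<theta> \<epsilon> (\<alpha> k) powr r) * ennreal (INF D\<in>tests k. measure (P \<theta>)
      {\<omega> \<in> space \<Omega>. T_gt (fst D) (Fbound \<Psi> I \<Theta> N i \<theta> \<epsilon> (\<alpha> k)) \<omega>})
      \<le> (INF D\<in>tests k. T_moment (P \<theta>) (fst D) r)" if "\<epsilon> < 1" for \<epsilon> k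
    using INF_moment_ge[OF \<theta>_all Fbound_nonneg[OF i sep] r] that by simp
qed

lemma INF_moment_asymptotic_indifference:
  assumes \<theta>: "\<theta> \<in> \<Theta>in" and r: "0 \<le> r"
  shows "\<exists>h. h \<longlonglongrightarrow> 0 \<and> (\<forall>k. ennreal (Min ((\<lambda>i. Fbound \<Psi> I \<Theta> N i \<theta> 0 (\<alpha> k)) ` {0..N}) powr r
           * (1 + h k)) \<le> (INF D\<in>tests k. T_moment (P \<theta>) (fst D) r))"
proof (rule moment_asymptotic_lower_bound[OF r,
      where H = "\<lambda>\<epsilon> k. Min ((\<lambda>i. Fbound \<Psi> I \<Theta> N i \<theta> \<epsilon> (\<alpha> k)) ` {0..N})"
        and q = "\<lambda>\<epsilon> k. INF D\<in>tests k. measure (P \<theta>) {\<omega> \<in> space \<Omega>.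
                   T_gt (fst D) (Min ((\<lambda>i. Fbound \<Psi> I \<Theta> N i \<theta> \<epsilon> (\<alpha> k)) ` {0..N})) \<omega>}"])
  have sep: "separated_except i \<theta>" for i by (rule separated_except_Theta_in[OF \<theta>])
  have \<theta>_all: "\<theta> \<in> \<Theta>all" using Theta_in_subset \<theta> by blast
  show "0 \<le> Min ((\<lambda>i. Fbound \<Psi> I \<Theta> N i \<theta> 0 (\<alpha> k)) ` {0..N})" for k
    using Min_Fbound_nonneg sep by simp
  show "0 \<le> Min ((\<lambda>i. Fbound \<Psi> I \<Theta> N i \<theta> \<epsilon> (\<alpha> k)) ` {0..N})" if "\<epsilon> < 1" for \<epsilon> k
    using Min_Fbound_nonneg sep that by simp
  show "\<exists>\<epsilon>>0. \<epsilon> < 1 \<and> eventually (\<lambda>k. s * Min ((\<lambda>i. Fbound \<Psi> I \<Theta> N i \<theta> 0 (\<alpha> k)) ` {0..N})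
      \<le> Min ((\<lambda>i. Fbound \<Psi> I \<Theta> N i \<theta> \<epsilon> (\<alpha> k)) ` {0..N})) sequentially"
    if s: "0 < s" "s < 1" for s
  proof -
    obtain \<epsilon> where \<epsilon>: "0 < \<epsilon>" "\<epsilon> < 1" and ev: "\<And>\<theta>. (\<And>i. i \<le> N \<Longrightarrow> separated_except i \<theta>) \<Longrightarrow>
        eventually (\<lambda>k. s * Min ((\<lambda>i. Fbound \<Psi> I \<Theta> N i \<theta> 0 (\<alpha> k)) ` {0..N})
          \<le> Min ((\<lambda>i. Fbound \<Psi> I \<Theta> N i \<theta> \<epsilon> (\<alpha> k)) ` {0..N})) sequentially"
      using Min_Fbound_eventually_ge[OF s] by blast
    show ?thesis using \<epsilon> ev[OF sep] by blast
  qed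
  show "(\<lambda>k. INF D\<in>tests k. measure (P \<theta>) {\<omega> \<in> space \<Omega>.
      T_gt (fst D) (Min ((\<lambda>i. Fbound \<Psi> I \<Theta> N i \<theta> \<epsilon> (\<alpha> k)) ` {0..N})) \<omega>}) \<longlonglongrightarrow> 1"
    if "0 < \<epsilon>" "\<epsilon> < 1" for \<epsilon>
    using INF_prob_late_stop_tendsto_1_indifference[OF \<theta> that] .
  show "ennreal (Min ((\<lambda>i. Fbound \<Psi> I \<Theta> N i \<theta> \<epsilon> (\<alpha> k)) ` {0..N}) powr r)
      * ennreal (INF D\<in>tests k. measure (P \<theta>) {\<omega> \<in> space \<Omega>.
          T_gt (fst D) (Min ((\<lambda>i. Fbound \<Psi> I \<Theta> N i \<theta> \<epsilon> (\<alpha> k)) ` {0..N})) \<omega>})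
      \<le> (INF D\<in>tests k. T_moment (P \<theta>) (fst D) r)" if "\<epsilon> < 1" for \<epsilon> k
    using INF_moment_ge[OF \<theta>_all Min_Fbound_nonneg[OF sep] r] that by simp
qed

end

theorem theorem1:
  fixes \<Omega> :: "'w measure" and S :: "'x measure" and X :: "nat \<Rightarrow> 'w \<Rightarrow> 'x"
    and P :: "'p::euclidean_space \<Rightarrow> 'w measure"
    and N :: nat and \<Theta> :: "nat \<Rightarrow> 'p set" and \<Theta>in :: "'p set"
    and \<mu> :: "nat \<Rightarrow> (nat \<Rightarrow> 'x) measure" and p :: "'p \<Rightarrow> nat \<Rightarrow> (nat \<Rightarrow> 'x) \<Rightarrow> real"
    and \<psi> :: "real \<Rightarrow> real" and I :: "'p \<Rightarrow> 'p \<Rightarrow> real"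
    and \<alpha> :: "nat \<Rightarrow> nat \<Rightarrow> nat \<Rightarrow> real" and c :: "nat \<Rightarrow> nat \<Rightarrow> real"
  defines "\<Theta>all \<equiv> \<Theta>in \<union> (\<Union>i\<in>{0..N}. \<Theta> i)"
    and "\<Psi> \<equiv> inv_into {0..} \<psi>"
  assumes N_ge: "N \<ge> 1"
    and Theta_disj: "disjoint_family_on \<Theta> {0..N}"
    and Theta_in_disj: "\<forall>i\<le>N. \<Theta>in \<inter> \<Theta> i = {}"
    and Theta_ne: "\<forall>i\<le>N. \<Theta> i \<noteq> {}"
    and X_meas: "\<forall>i. X i \<in> measurable \<Omega> S"
    and P_prob: "\<forall>\<theta>\<in>\<Theta>all. prob_space (P \<theta>) \<and> sets (P \<theta>) = sets \<Omega>"
    and mu_sf: "\<forall>n\<ge>1. sets (\<mu> n) = sets (PiM {1..n} (\<lambda>_. S)) \<and> sigma_finite_measure (\<mu> n)"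
    and dens: "\<forall>\<theta>\<in>\<Theta>all. \<forall>n\<ge>1. (\<forall>x. 0 \<le> p \<theta> n x)
                 \<and> p \<theta> n \<in> borel_measurable (PiM {1..n} (\<lambda>_. S))
                 \<and> distr (P \<theta>) (PiM {1..n} (\<lambda>_. S)) (obs_vec X n)
                     = density (\<mu> n) (\<lambda>x. ennreal (p \<theta> n x))"
    and mut_ac: "\<forall>\<theta>\<in>\<Theta>all. \<forall>\<theta>'\<in>\<Theta>all. \<forall>n\<ge>1.
                 absolutely_continuous (distr (P \<theta>) (PiM {1..n} (\<lambda>_. S)) (obs_vec X n))
                                       (distr (P \<theta>') (PiM {1..n} (\<lambda>_. S)) (obs_vec X n))"
    and psi_mono: "strict_mono_on {0..} \<psi>"
    and psi_bij: "bij_betw \<psi> {0..} {0..}"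
    and psi_lim: "filterlim \<psi> at_top at_top"
    and Psi_lim: "filterlim \<Psi> at_top at_top"
    and Psi_reg: "\<exists>g. (\<forall>\<^sub>F \<delta> in at 1. ((\<lambda>t. \<Psi> (\<delta> * t) / \<Psi> t) \<longlongrightarrow> g \<delta>) at_top)
                      \<and> (g \<longlongrightarrow> 1) (at 1)"
    and I_pos: "\<forall>\<theta>\<in>\<Theta>all. \<forall>\<theta>'\<in>\<Theta>all. \<theta> \<noteq> \<theta>' \<longrightarrow> 0 < I \<theta> \<theta>'"
    and I_cont: "continuous_on {(\<theta>, \<theta>'). \<theta> \<in> \<Theta>all \<and> \<theta>' \<in> \<Theta>all \<and> \<theta> \<noteq> \<theta>'}
                   (\<lambda>(\<theta>, \<theta>'). I \<theta> \<theta>')"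
    and sep1: "\<forall>i\<le>N. \<forall>\<theta>\<in>\<Theta> i. 0 < Min ((\<lambda>j. Ij I \<Theta> j \<theta>) ` ({0..N} - {i}))"
    and sep2: "\<forall>\<theta>\<in>\<Theta>in. 0 < Min ((\<lambda>i. Ij I \<Theta> i \<theta>) ` {0..N})"
    and right_tail: "\<forall>\<epsilon>>0. \<forall>\<theta>\<in>\<Theta>all. \<forall>\<theta>'\<in>\<Theta>all. \<theta> \<noteq> \<theta>' \<longrightarrow>
                 ((\<lambda>L::nat. measure (P \<theta>)
                     {\<omega>\<in>space \<Omega>. (1 / \<psi> (real L)) * Max ((\<lambda>n. llr p X \<theta> \<theta>' n \<omega>) ` {1..L})
                                   > (1 + \<epsilon>) * I \<theta> \<theta>'}) \<longlonglongrightarrow> 0)"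
    and alpha_range: "\<forall>k i j. i \<le> N \<and> j \<le> N \<and> i \<noteq> j \<longrightarrow> 0 < \<alpha> k i j \<and> \<alpha> k i j < 1"
    and alpha_max_lim: "(\<lambda>k. alpha_max N (\<alpha> k)) \<longlonglongrightarrow> 0"
    and alpha_ratio: "\<forall>i j. i \<le> N \<and> j \<le> N \<and> i \<noteq> j \<longrightarrow> 0 < c i j \<and> c i j \<le> 1 \<and>
                 ((\<lambda>k. \<bar>ln (\<alpha> k i j)\<bar> / \<bar>ln (alpha_max N (\<alpha> k))\<bar>) \<longlonglongrightarrow> c i j)"
  shows "(\<forall>\<epsilon>. 0 < \<epsilon> \<and> \<epsilon> < 1 \<longrightarrow>
            (\<forall>i\<le>N. \<forall>\<theta>\<in>\<Theta> i.
               (\<lambda>k. INF D\<in>test_class \<Omega> S X N \<Theta> P (\<alpha> k).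
                      measure (P \<theta>) {\<omega>\<in>space \<Omega>. T_gt (fst D) (Fbound \<Psi> I \<Theta> N i \<theta> \<epsilon> (\<alpha> k)) \<omega>})
                 \<longlonglongrightarrow> 1)
          \<and> (\<forall>\<theta>\<in>\<Theta>in.
               (\<lambda>k. INF D\<in>test_class \<Omega> S X N \<Theta> P (\<alpha> k).
                      measure (P \<theta>) {\<omega>\<in>space \<Omega>.
                         T_gt (fst D) (Min ((\<lambda>i. Fbound \<Psi> I \<Theta> N i \<theta> \<epsilon> (\<alpha> k)) ` {0..N})) \<omega>})
                 \<longlonglongrightarrow> 1))
       \<and> (\<forall>r::real. r \<ge> 1 \<longrightarrow>
            (\<forall>i\<le>N. \<forall>\<theta>\<in>\<Theta> i. \<exists>h::nat \<Rightarrow> real. h \<longlonglongrightarrow> 0 \<and>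
               (\<forall>k. (INF D\<in>test_class \<Omega> S X N \<Theta> P (\<alpha> k). T_moment (P \<theta>) (fst D) r)
                      \<ge> ennreal (Fbound \<Psi> I \<Theta> N i \<theta> 0 (\<alpha> k) powr r * (1 + h k))))
          \<and> (\<forall>\<theta>\<in>\<Theta>in. \<exists>h::nat \<Rightarrow> real. h \<longlonglongrightarrow> 0 \<and>
               (\<forall>k. (INF D\<in>test_class \<Omega> S X N \<Theta> P (\<alpha> k). T_moment (P \<theta>) (fst D) r)
                      \<ge> ennreal (Min ((\<lambda>i. Fbound \<Psi> I \<Theta> N i \<theta> 0 (\<alpha> k)) ` {0..N}) powr r
                                 * (1 + h k)))))"
proof -
  interpret sequential_testing \<Omega> S X \<Theta>all P \<mu> p N \<Theta> \<Theta>in \<psi> \<Psi> I \<alpha>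
  proof (intro sequential_testing.intro likelihood_model.intro observations.intro
      likelihood_model_axioms.intro sequential_testing_axioms.intro)
    show "0 \<le> \<Psi> y \<and> \<psi> (\<Psi> y) = y" if "0 \<le> y" for y
      using psi_bij that unfolding \<open>\<Psi> \<equiv> inv_into {0..} \<psi>\<close> bij_betw_def
      by (metis atLeast_iff f_inv_into_f inv_into_into)
    show "0 \<le> \<psi> x" if "0 \<le> x" for x
      using psi_bij that unfolding bij_betw_def by auto
    show "0 < Ij I \<Theta> j \<theta>" if "i \<le> N" "j \<le> N" "j \<noteq> i" "\<theta> \<in> \<Theta> i" for i j \<theta>
    proof -
      have j: "j \<in> {0..N} - {i}" using that by auto
      then have "(\<lambda>j. Ij I \<Theta> j \<theta>) ` ({0..N} - {i}) \<noteq> {}" by blast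
      moreover have "0 < Min ((\<lambda>j. Ij I \<Theta> j \<theta>) ` ({0..N} - {i}))"
        using sep1 that(1,4) by simp
      ultimately show ?thesis using j by (simp add: Min_gr_iff)
    qed
    show "0 < Ij I \<Theta> j \<theta>" if "j \<le> N" "\<theta> \<in> \<Theta>in" for j \<theta>
      using sep2 that by (subst (asm) Min_gr_iff) auto
    show "\<Theta> i \<subseteq> \<Theta>all" if "i \<le> N" for i
      using that unfolding \<open>\<Theta>all \<equiv> \<Theta>in \<union> (\<Union>i\<in>{0..N}. \<Theta> i)\<close> by auto
    show "\<Theta>in \<subseteq> \<Theta>all"
      unfolding \<open>\<Theta>all \<equiv> \<Theta>in \<union> (\<Union>i\<in>{0..N}. \<Theta> i)\<close> by auto
  qed (use X_meas P_prob mu_sf dens mut_ac N_ge Theta_disj Theta_in_disj Theta_ne psi_mono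
      Psi_lim Psi_reg I_pos right_tail alpha_range alpha_max_lim in simp_all)
  show ?thesis
    using INF_prob_late_stop_tendsto_1 INF_prob_late_stop_tendsto_1_indifference
      INF_moment_asymptotic_Theta INF_moment_asymptotic_indifference by auto
qed

end
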